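(* Let $m\ge 0$ be an integer. For every $\boldsymbol v_h\in V_h$, \[ \sum_{e\in\mathcal{E}_h^b}\|h_K^{-1/2}T_1^m\boldsymbol v_h\|_{0,e}^2\lesssim \|\boldsymbol v_h\|_{0,\Omega_h}^2, \qquad \sum_{e\in\mathcal{E}_h^b}\|h_K^{-1/2}T^m\boldsymbol v_h\|_{0,e}^2\lesssim h^{-2}\|\boldsymbol v_h\|_{0,\Omega_h}^2 . \]
   Context: Let $\Omega\subset\mathbb{R}^2$ be a connected open set with Lipschitz boundary $\Gamma$, approximated by a polygonal domain $\Omega_h$ with boundary $\Gamma_h$. Let $\mathcal{T}_h$ be a triangulation of $\Omega_h$ that is shape-regular and quasi-uniform, and such that every mesh vertex lying on $\Gamma_h$ also lies on $\Gamma$; $h_K=\operatorname{diam}K$, $h=\max_K h_K$. $\mathcal{E}_h^b$ is the set of edges lying on $\Gamma_h$; for $e\in\mathcal{E}_h^b$, $h_K$ denotes the diameter of the triangle $K$ containing $e$. It is assumed that there is a map $M_h:\Gamma_h\to\Gamma$, $M_h(\boldsymbol x_h)=\boldsymbol x_h+\delta_h(\boldsymbol x_h)\boldsymbol\nu_h(\boldsymbol x_h)$, where $\boldsymbol\nu_h$ is a unit vector field on $\Gamma_h$ and $\delta_h(\boldsymbol x_h)=|M_h(\boldsymbol x_h)-\boldsymbol x_h|$, with $\delta:=\sup_{\Gamma_h}\delta_h\lesssim h^2$ and $\|\boldsymbol n\circ M_h-\boldsymbol n_h\|_{L^\infty(\Gamma_h)}\lesssim h$ ($\boldsymbol n$,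 $\boldsymbol n_h$ the unit outward normals on $\Gamma$, $\Gamma_h$). For a (piecewise) smooth vector field $\boldsymbol v$ and integer $m\ge0$, define on $\Gamma_h$: $T^m\boldsymbol v=\sum_{j=0}^m\frac{\delta_h^j}{j!}\partial_{\boldsymbol\nu_h}^j\boldsymbol v$ and $T_1^m\boldsymbol v=\sum_{j=1}^m\frac{\delta_h^j}{j!}\partial_{\boldsymbol\nu_h}^j\boldsymbol v$, where $\partial^j_{\boldsymbol\nu_h}$ is the $j$-th directional derivative in direction $\boldsymbol\nu_h$ (for a piecewise polynomial, the derivatives on $e$ are those of its polynomial restriction to the element containing $e$). For an integer $k\ge1$, $V_h=\{\boldsymbol v_h\in H(\mathrm{div},\Omega_h):\boldsymbol v_h|_K\in RT_k(K)\ \forall K\in\mathcal{T}_h\}$ with $RT_k(K)=\boldsymbol P_k(K)\oplus\boldsymbol xP_k(K)$. The notation $a\lesssim b$ means $a\le Cb$ with $C$ independent of $h$ and of the functions involved. *)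

theory Defs
  imports "HOL-Analysis.Analysis"
begin

type_synonym pt = "real \<times> real"

definition lipschitz_boundary :: "pt set \<Rightarrow> bool" where
  "lipschitz_boundary \<Omega> \<longleftrightarrow>
     (\<forall>x\<in>frontier \<Omega>. \<exists>r>0. \<exists>(R :: pt \<Rightarrow> pt) (g :: real \<Rightarrow> real) (L :: real).
        orthogonal_transformation R \<and> (\<forall>s t. \<bar>g s - g t\<bar> \<le> L * \<bar>s - t\<bar>) \<and>
        (\<forall>y\<in>ball x r. y \<in> \<Omega> \<longleftrightarrow> snd (R (y - x)) < g (fst (R (y - x)))))"

definition outward_normal :: "pt set \<Rightarrow> pt \<Rightarrow> pt \<Rightarrow> bool" where
  "outward_normal \<Omega> y n \<longleftrightarrow> norm n = 1 \<and>
     (\<forall>\<epsilon>>0. \<exists>r>0. \<forall>z\<in>ball y r.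
        ((z - y) \<bullet> n < - \<epsilon> * norm (z - y) \<longrightarrow> z \<in> \<Omega>) \<and>
        ((z - y) \<bullet> n > \<epsilon> * norm (z - y) \<longrightarrow> z \<notin> \<Omega>))"

definition verts :: "pt set \<Rightarrow> pt set" where
  "verts K = {x. x extreme_point_of K}"

definition is_triangle :: "pt set \<Rightarrow> bool" where
  "is_triangle K \<longleftrightarrow> (\<exists>a b c. \<not> collinear {a, b, c} \<and> K = convex hull {a, b, c})"

definition edges :: "pt set \<Rightarrow> pt set set" where
  "edges K = {closed_segment a b | a b. a \<in> verts K \<and> b \<in> verts K \<and> a \<noteq> b}"

definition diam :: "pt set \<Rightarrow> real" where
  "diam K = diameter K"

definition inradius :: "pt set \<Rightarrow> real" where
  "inradius K = Sup {r. \<exists>x. ball x r \<subseteq> K}"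

definition triangulation :: "pt set set \<Rightarrow> bool" where
  "triangulation \<T> \<longleftrightarrow> finite \<T> \<and> \<T> \<noteq> {} \<and> (\<forall>K\<in>\<T>. is_triangle K) \<and>
     (\<forall>K\<in>\<T>. \<forall>K'\<in>\<T>. K \<noteq> K' \<longrightarrow>
        K \<inter> K' = {} \<or> (\<exists>v\<in>verts K \<inter> verts K'. K \<inter> K' = {v}) \<or>
        (\<exists>e\<in>edges K \<inter> edges K'. K \<inter> K' = e))"

definition dom_h :: "pt set set \<Rightarrow> pt set" where
  "dom_h \<T> = interior (\<Union>\<T>)"

definition bdry_h :: "pt set set \<Rightarrow> pt set" where
  "bdry_h \<T> = frontier (dom_h \<T>)"

definition meshsize :: "pt set set \<Rightarrow> real" where
  "meshsize \<T> = Max (diam ` \<T>)"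

definition bedges :: "pt set set \<Rightarrow> (pt set \<times> pt set) set" where
  "bedges \<T> = {(K, e). K \<in> \<T> \<and> e \<in> edges K \<and> e \<subseteq> bdry_h \<T>}"

definition edge_normal :: "pt set \<Rightarrow> pt set \<Rightarrow> pt" where
  "edge_normal K e = (SOME n. norm n = 1 \<and> (\<forall>x\<in>e. \<forall>y\<in>e. (y - x) \<bullet> n = 0) \<and>
                            (\<forall>z\<in>K. \<forall>x\<in>e. (z - x) \<bullet> n \<le> 0))"

definition edge_int :: "pt set \<Rightarrow> (pt \<Rightarrow> real) \<Rightarrow> ennreal" where
  "edge_int e f = (let (a, b) = (SOME (a, b). a \<noteq> b \<and> e = closed_segment a b) in
      ennreal (dist a b) * (\<integral>\<^sup>+ t\<in>{0..1}. ennreal (f (a + t *\<^sub>R (b - a))) \<partial>lborel))"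

definition ae_edge :: "pt set \<Rightarrow> (pt \<Rightarrow> bool) \<Rightarrow> bool" where
  "ae_edge e P = (let (a, b) = (SOME (a, b). a \<noteq> b \<and> e = closed_segment a b) in
      (AE t in lebesgue_on {0..1}. P (a + t *\<^sub>R (b - a))))"

definition poly2 :: "nat \<Rightarrow> (pt \<Rightarrow> real) \<Rightarrow> bool" where
  "poly2 k p \<longleftrightarrow> (\<exists>c :: nat \<Rightarrow> nat \<Rightarrow> real. \<forall>x.
      p x = (\<Sum>i\<le>k. \<Sum>j\<le>k - i. c i j * fst x ^ i * snd x ^ j))"

text \<open>RT_k = P_k^2 + x P_k (as polynomial vector fields on the whole plane).\<close>
definition RT :: "nat \<Rightarrow> (pt \<Rightarrow> pt) \<Rightarrow> bool" where
  "RT k v \<longleftrightarrow> (\<exists>p1 p2 q. poly2 k p1 \<and> poly2 k p2 \<and> poly2 k q \<and>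
      (\<forall>x. v x = (p1 x + fst x * q x, p2 x + snd x * q x)))"

definition dirderiv :: "nat \<Rightarrow> pt \<Rightarrow> (pt \<Rightarrow> pt) \<Rightarrow> pt \<Rightarrow> pt" where
  "dirderiv j d v x = ((deriv ^^ j) (\<lambda>t. fst (v (x + t *\<^sub>R d))) 0,
                       (deriv ^^ j) (\<lambda>t. snd (v (x + t *\<^sub>R d))) 0)"

primrec iter_dd :: "pt list \<Rightarrow> (pt \<Rightarrow> real) \<Rightarrow> pt \<Rightarrow> real" where
  "iter_dd [] \<phi> = \<phi>"
| "iter_dd (d # ds) \<phi> = (\<lambda>x. frechet_derivative (iter_dd ds \<phi>) (at x) d)"

definition smooth_fun :: "(pt \<Rightarrow> real) \<Rightarrow> bool" where
  "smooth_fun \<phi> \<longleftrightarrow> (\<forall>ds x. iter_dd ds \<phi> differentiable (at x))"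

definition test_fun :: "pt set \<Rightarrow> (pt \<Rightarrow> real) \<Rightarrow> bool" where
  "test_fun U \<phi> \<longleftrightarrow> smooth_fun \<phi> \<and> (\<exists>S. compact S \<and> S \<subseteq> U \<and> (\<forall>x. x \<notin> S \<longrightarrow> \<phi> x = 0))"

definition grad :: "(pt \<Rightarrow> real) \<Rightarrow> pt \<Rightarrow> pt" where
  "grad \<phi> x = (frechet_derivative \<phi> (at x) (1, 0), frechet_derivative \<phi> (at x) (0, 1))"

definition L2_on :: "pt set \<Rightarrow> (pt \<Rightarrow> 'a::euclidean_space) \<Rightarrow> bool" where
  "L2_on U v \<longleftrightarrow> (\<lambda>x. indicator U x *\<^sub>R v x) \<in> borel_measurable lborel \<and>
                 set_integrable lborel U (\<lambda>x. norm (v x) ^ 2)"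

definition Hdiv :: "pt set \<Rightarrow> (pt \<Rightarrow> pt) \<Rightarrow> bool" where
  "Hdiv U v \<longleftrightarrow> L2_on U v \<and> (\<exists>w :: pt \<Rightarrow> real. L2_on U w \<and>
     (\<forall>\<phi>. test_fun U \<phi> \<longrightarrow> (LINT x:U|lborel. v x \<bullet> grad \<phi> x + w x * \<phi> x) = 0))"

text \<open>A discrete field is given elementwise: V K is the RT_k polynomial on K.
  The global field takes on each point the value of (some) element containing it.\<close>
definition glob :: "pt set set \<Rightarrow> (pt set \<Rightarrow> pt \<Rightarrow> pt) \<Rightarrow> pt \<Rightarrow> pt" where
  "glob \<T> V x = V (SOME K. K \<in> \<T> \<and> x \<in> K) x"

definition Vh :: "nat \<Rightarrow> pt set set \<Rightarrow> (pt set \<Rightarrow> pt \<Rightarrow> pt) set" where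
  "Vh k \<T> = {V. (\<forall>K\<in>\<T>. RT k (V K)) \<and> Hdiv (dom_h \<T>) (glob \<T> V)}"

definition Tm :: "nat \<Rightarrow> nat \<Rightarrow> (pt \<Rightarrow> pt) \<Rightarrow> (pt \<Rightarrow> pt) \<Rightarrow> (pt \<Rightarrow> pt) \<Rightarrow> pt \<Rightarrow> pt" where
  "Tm j0 m Mh \<nu> v x =
     (\<Sum>j=j0..m. (norm (Mh x - x) ^ j / fact j) *\<^sub>R dirderiv j (\<nu> x) v x)"

definition admissible ::
  "pt set \<Rightarrow> real \<Rightarrow> real \<Rightarrow> real \<Rightarrow> real \<Rightarrow> pt set set \<Rightarrow> (pt \<Rightarrow> pt) \<Rightarrow> (pt \<Rightarrow> pt) \<Rightarrow> bool" where
  "admissible \<Omega> \<sigma> \<rho> C\<delta> Cn \<T> Mh \<nu> \<longleftrightarrow>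
     triangulation \<T> \<and> open (dom_h \<T>) \<and> connected (dom_h \<T>) \<and>
     (\<forall>K\<in>\<T>. diam K \<le> \<sigma> * inradius K) \<and>
     (\<forall>K\<in>\<T>. meshsize \<T> \<le> \<rho> * diam K) \<and>
     (\<forall>K\<in>\<T>. \<forall>v\<in>verts K. v \<in> bdry_h \<T> \<longrightarrow> v \<in> frontier \<Omega>) \<and>
     Mh \<in> borel_measurable borel \<and> \<nu> \<in> borel_measurable borel \<and>
     (\<forall>x\<in>bdry_h \<T>. Mh x \<in> frontier \<Omega> \<and> norm (\<nu> x) = 1 \<and>
                       Mh x = x + norm (Mh x - x) *\<^sub>R \<nu> x \<and>
                       norm (Mh x - x) \<le> C\<delta> * meshsize \<T> ^ 2) \<and>
     (\<forall>(K, e)\<in>bedges \<T>. ae_edge e (\<lambda>x. \<exists>n. outward_normal \<Omega> (Mh x) n \<and>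
                            norm (n - edge_normal K e) \<le> Cn * meshsize \<T>))"

end

theory Submission
  imports Defs "HOL-Computational_Algebra.Polynomial"
begin

definition mono_idx :: "nat \<Rightarrow> (nat \<times> nat) set" where
  "mono_idx N = {..N} \<times> {..N}"

definition bipoly :: "nat \<Rightarrow> (nat \<times> nat \<Rightarrow> real) \<Rightarrow> pt \<Rightarrow> real" where
  "bipoly N c x = (\<Sum>ab\<in>mono_idx N. c ab * fst x ^ fst ab * snd x ^ snd ab)"

definition coeff_l1 :: "nat \<Rightarrow> (nat \<times> nat \<Rightarrow> real) \<Rightarrow> real" where
  "coeff_l1 N c = (\<Sum>ab\<in>mono_idx N. \<bar>c ab\<bar>)"

definition unit_ball_energy :: "nat \<Rightarrow> (nat \<times> nat \<Rightarrow> real) \<Rightarrow> ennreal" where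
  "unit_ball_energy N c = (\<integral>\<^sup>+ y\<in>cball 0 1. ennreal ((bipoly N c y)\<^sup>2) \<partial>lborel)"

definition is_bipoly :: "nat \<Rightarrow> (pt \<Rightarrow> real) \<Rightarrow> bool" where
  "is_bipoly N p \<longleftrightarrow> (\<exists>c. p = bipoly N c)"

lemma finite_mono_idx [simp]: "finite (mono_idx N)"
  by (simp add: mono_idx_def)

lemma sum_mono_idx: "(\<Sum>ab\<in>mono_idx N. f ab) = (\<Sum>a\<le>N. \<Sum>b\<le>N. f (a, b))"
  unfolding mono_idx_def by (simp add: sum.cartesian_product)

lemma bipoly_by_powers_fst:
  "bipoly N c (x, y) = (\<Sum>a\<le>N. (\<Sum>b\<le>N. c (a, b) * y ^ b) * x ^ a)"
  unfolding bipoly_def sum_mono_idx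
  by (simp add: sum_distrib_left sum_distrib_right mult_ac)

lemma sets_borel_cball [measurable]: "cball (x :: pt) r \<in> sets borel"
  by (simp add: borel_closed)

lemma continuous_on_bipoly [continuous_intros]: "continuous_on S (bipoly N c)"
  unfolding bipoly_def by (intro continuous_intros)

lemma borel_measurable_bipoly [measurable]: "bipoly N c \<in> borel_measurable borel"
  by (intro borel_measurable_continuous_onI continuous_on_bipoly)

lemma bipoly_scale_coeffs: "bipoly N (\<lambda>ab. t * c ab) y = t * bipoly N c y"
  unfolding bipoly_def by (simp add: sum_distrib_left mult_ac)

lemma coeff_l1_nonneg: "0 \<le> coeff_l1 N c"
  unfolding coeff_l1_def by (simp add: sum_nonneg)

lemma coeff_l1_scale: "coeff_l1 N (\<lambda>ab. t * c ab) = \<bar>t\<bar> * coeff_l1 N c"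
  unfolding coeff_l1_def by (simp add: sum_distrib_left abs_mult)

lemma unit_ball_energy_scale:
  "unit_ball_energy N (\<lambda>ab. t * c ab) = ennreal (t\<^sup>2) * unit_ball_energy N c"
proof -
  have "unit_ball_energy N (\<lambda>ab. t * c ab) =
      (\<integral>\<^sup>+ y. ennreal (t\<^sup>2) * (ennreal ((bipoly N c y)\<^sup>2) * indicator (cball 0 1) y) \<partial>lborel)"
    unfolding unit_ball_energy_def bipoly_scale_coeffs
    by (intro nn_integral_cong) (simp add: power_mult_distrib ennreal_mult mult_ac)
  also have "\<dots> = ennreal (t\<^sup>2) * unit_ball_energy N c"
    unfolding unit_ball_energy_def by (rule nn_integral_cmult) measurable
  finally show ?thesis .
qed

lemma square_sum_le: "(a + b)\<^sup>2 \<le> 2 * a\<^sup>2 + 2 * (b :: real)\<^sup>2"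
proof -
  have "0 \<le> (a - b)\<^sup>2" by simp
  then show ?thesis by (simp add: power2_eq_square algebra_simps)
qed

lemma bipoly_diff_le_coeff_l1:
  assumes "y \<in> cball 0 1"
  shows "\<bar>bipoly N c y - bipoly N d y\<bar> \<le> coeff_l1 N (\<lambda>ab. c ab - d ab)"
proof -
  have "\<bar>fst y\<bar> \<le> 1" "\<bar>snd y\<bar> \<le> 1"
    using assms norm_fst_le[of "fst y" "snd y"] norm_snd_le[of "snd y" "fst y"] by auto
  then have mono_le_1: "\<bar>fst y ^ a\<bar> * \<bar>snd y ^ b\<bar> \<le> 1" for a b
    by (simp add: power_abs mult_le_one power_le_one)
  have "\<bar>bipoly N c y - bipoly N d y\<bar> =
      \<bar>\<Sum>ab\<in>mono_idx N. (c ab - d ab) * (fst y ^ fst ab * snd y ^ snd ab)\<bar>"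
    unfolding bipoly_def by (simp add: sum_subtractf[symmetric] algebra_simps)
  also have "\<dots> \<le> (\<Sum>ab\<in>mono_idx N. \<bar>c ab - d ab\<bar>)"
    by (rule order.trans[OF sum_abs sum_mono])
      (simp add: abs_mult mult_left_le[OF mono_le_1])
  finally show ?thesis by (simp add: coeff_l1_def)
qed

lemma poly_coeffs_zero_if_vanishes_on_infinite:
  fixes d :: "nat \<Rightarrow> real"
  assumes "infinite S" "\<And>x. x \<in> S \<Longrightarrow> (\<Sum>i\<le>N. d i * x ^ i) = 0" "i \<le> N"
  shows "d i = 0"
proof -
  define P where "P = (\<Sum>i\<le>N. monom (d i) i)"
  have "S \<subseteq> {x. poly P x = 0}"
    using assms(2) by (auto simp: P_def poly_sum poly_monom)
  then have "P = 0"
    using poly_roots_finite[of P] assms(1) finite_subset by blast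
  moreover have "coeff P i = d i"
    using assms(3) by (simp add: P_def coeff_sum)
  ultimately show ?thesis by simp
qed

lemma bipoly_vanishes_on_ball_imp_coeffs_zero:
  assumes "\<forall>y\<in>ball 0 1. bipoly N c y = 0" "ab \<in> mono_idx N"
  shows "c ab = 0"
proof -
  obtain a b where ab: "ab = (a, b)" "a \<le> N" "b \<le> N"
    using assms(2) by (auto simp: mono_idx_def)
  let ?I = "{-1/2<..<1/2 :: real}"
  have "(x, y) \<in> ball 0 1" if "x \<in> ?I" "y \<in> ?I" for x y
  proof -
    have "\<bar>x\<bar> < 1/2" "\<bar>y\<bar> < 1/2" using that by auto
    then show ?thesis using norm_Pair_le[of x y] by (simp add: mem_ball_0)
  qed
  then have vanish: "(\<Sum>a\<le>N. (\<Sum>b\<le>N. c (a, b) * y ^ b) * x ^ a) = 0"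
    if "x \<in> ?I" "y \<in> ?I" for x y
    using assms(1) that by (simp flip: bipoly_by_powers_fst)
  have row_vanish: "(\<Sum>b\<le>N. c (a, b) * y ^ b) = 0" if y: "y \<in> ?I" for y
  proof (rule poly_coeffs_zero_if_vanishes_on_infinite
      [where S = ?I and N = N and d = "\<lambda>a. \<Sum>b\<le>N. c (a, b) * y ^ b"])
    show "(\<Sum>a\<le>N. (\<Sum>b\<le>N. c (a, b) * y ^ b) * x ^ a) = 0" if "x \<in> ?I" for x
      using vanish[OF that y] .
  qed (simp_all add: ab(2))
  have "c (a, b) = 0"
  proof (rule poly_coeffs_zero_if_vanishes_on_infinite[where S = ?I and N = N and d = "\<lambda>b. c (a, b)"])
    show "(\<Sum>b\<le>N. c (a, b) * y ^ b) = 0" if "y \<in> ?I" for y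
      using row_vanish[OF that] .
  qed (simp_all add: ab(3))
  then show ?thesis using ab(1) by simp
qed

lemma unit_ball_energy_pos:
  assumes "y0 \<in> ball 0 1" "bipoly N c y0 \<noteq> 0"
  shows "0 < unit_ball_energy N c"
proof -
  define \<eta> where "\<eta> = \<bar>bipoly N c y0\<bar>"
  have "open (ball 0 1 \<inter> {y. \<bar>bipoly N c y - bipoly N c y0\<bar> < \<eta> / 2})"
    by (intro open_Int open_ball open_Collect_less continuous_intros)
  moreover have "y0 \<in> ball 0 1 \<inter> {y. \<bar>bipoly N c y - bipoly N c y0\<bar> < \<eta> / 2}"
    using assms by (simp add: \<eta>_def)
  ultimately obtain \<epsilon> where \<epsilon>: "0 < \<epsilon>"
    "ball y0 \<epsilon> \<subseteq> ball 0 1 \<inter> {y. \<bar>bipoly N c y - bipoly N c y0\<bar> < \<eta> / 2}"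
    by (rule openE)
  have "(\<eta> / 2)\<^sup>2 \<le> (bipoly N c y)\<^sup>2" if "y \<in> ball y0 \<epsilon>" for y
  proof -
    have "\<bar>bipoly N c y - bipoly N c y0\<bar> < \<eta> / 2"
      using \<epsilon>(2) that by auto
    then have "\<eta> / 2 \<le> \<bar>bipoly N c y\<bar>"
      using abs_triangle_ineq2[of "bipoly N c y0" "bipoly N c y"] by (simp add: \<eta>_def abs_minus_commute)
    moreover have "0 \<le> \<eta> / 2" by (simp add: \<eta>_def)
    ultimately show ?thesis
      by (metis power2_abs power_mono)
  qed
  then have "ennreal ((\<eta> / 2)\<^sup>2) * emeasure lborel (ball y0 \<epsilon>) \<le> unit_ball_energy N c"
    using \<epsilon>(2) unfolding unit_ball_energy_def
    by (subst nn_integral_cmult_indicator[symmetric], simp)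
      (intro nn_integral_mono, auto split: split_indicator intro!: ennreal_leI)
  moreover have "0 < ennreal ((\<eta> / 2)\<^sup>2) * emeasure lborel (ball y0 \<epsilon>)"
    using assms(2) \<epsilon>(1) by (simp add: \<eta>_def emeasure_ball ennreal_zero_less_mult_iff)
  ultimately show ?thesis by order
qed


lemma unit_ball_energy_perturb:
  "unit_ball_energy N c \<le> 2 * unit_ball_energy N d
     + ennreal (2 * (coeff_l1 N (\<lambda>ab. c ab - d ab))\<^sup>2) * emeasure lborel (cball (0 :: pt) 1)"
proof -
  define \<epsilon> where "\<epsilon> = coeff_l1 N (\<lambda>ab. c ab - d ab)"
  have pointwise: "(bipoly N c y)\<^sup>2 \<le> 2 * (bipoly N d y)\<^sup>2 + 2 * \<epsilon>\<^sup>2" if "y \<in> cball 0 1" for y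
  proof -
    have "\<bar>bipoly N c y - bipoly N d y\<bar> \<le> \<epsilon>"
      unfolding \<epsilon>_def by (rule bipoly_diff_le_coeff_l1[OF that])
    then have "(bipoly N c y - bipoly N d y)\<^sup>2 \<le> \<epsilon>\<^sup>2"
      using power_mono[of "\<bar>bipoly N c y - bipoly N d y\<bar>" \<epsilon> 2] by simp
    then show ?thesis
      using square_sum_le[of "bipoly N d y" "bipoly N c y - bipoly N d y"] by simp
  qed
  have "unit_ball_energy N c \<le> (\<integral>\<^sup>+ y. 2 * (ennreal ((bipoly N d y)\<^sup>2) * indicator (cball 0 1) y)
      + ennreal (2 * \<epsilon>\<^sup>2) * indicator (cball 0 1) y \<partial>lborel)"
    unfolding unit_ball_energy_def
  proof (intro nn_integral_mono)
    fix y
    have "ennreal ((bipoly N c y)\<^sup>2) \<le> 2 * ennreal ((bipoly N d y)\<^sup>2) + ennreal (2 * \<epsilon>\<^sup>2)"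
      if "y \<in> cball 0 1"
    proof -
      have "ennreal ((bipoly N c y)\<^sup>2) \<le> ennreal (2 * (bipoly N d y)\<^sup>2) + ennreal (2 * \<epsilon>\<^sup>2)"
        using ennreal_leI[OF pointwise[OF that]] by (simp add: ennreal_plus[symmetric] del: ennreal_plus)
      then show ?thesis by (simp add: ennreal_mult)
    qed
    then show "ennreal ((bipoly N c y)\<^sup>2) * indicator (cball 0 1) y
        \<le> 2 * (ennreal ((bipoly N d y)\<^sup>2) * indicator (cball 0 1) y)
          + ennreal (2 * \<epsilon>\<^sup>2) * indicator (cball 0 1) y"
      by (cases "y \<in> cball 0 1") simp_all
  qed
  also have "\<dots> = 2 * unit_ball_energy N d + ennreal (2 * \<epsilon>\<^sup>2) * emeasure lborel (cball (0 :: pt) 1)"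
    unfolding unit_ball_energy_def
    by (subst nn_integral_add, measurable, measurable, subst nn_integral_cmult, measurable)
      (simp add: nn_integral_cmult_indicator)
  finally show ?thesis by (simp add: \<epsilon>_def)
qed

lemma unit_ball_energy_eq_0_imp_coeff_zero:
  assumes "unit_ball_energy N c = 0" "ab \<in> mono_idx N"
  shows "c ab = 0"
proof (rule ccontr)
  assume "c ab \<noteq> 0"
  then obtain y where "y \<in> ball 0 1" "bipoly N c y \<noteq> 0"
    using bipoly_vanishes_on_ball_imp_coeffs_zero assms(2) by blast
  then have "0 < unit_ball_energy N c"
    by (rule unit_ball_energy_pos)
  then show False using assms(1) by simp
qed

lemma unit_ball_energy_eq_0_of_limit:
  assumes lim: "\<forall>ab\<in>mono_idx N. (\<lambda>n. D n ab) \<longlonglongrightarrow> g ab"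
    and small: "\<And>n. unit_ball_energy N (D n) \<le> ennreal (e n)" "\<And>n. 0 \<le> e n" and "e \<longlonglongrightarrow> 0"
  shows "unit_ball_energy N g = 0"
proof -
  define \<epsilon> where "\<epsilon> n = coeff_l1 N (\<lambda>ab. g ab - D n ab)" for n
  define \<mu> where "\<mu> = measure lborel (cball (0 :: pt) 1)"
  have \<mu>: "emeasure lborel (cball (0 :: pt) 1) = ennreal \<mu>" "0 \<le> \<mu>"
    unfolding \<mu>_def using emeasure_lborel_cball_finite[of "0 :: pt" 1]
    by (auto intro: emeasure_eq_ennreal_measure)
  have "\<epsilon> \<longlonglongrightarrow> coeff_l1 N (\<lambda>ab. g ab - g ab)"
    unfolding \<epsilon>_def coeff_l1_def using lim by (intro tendsto_intros) auto
  then have "(\<lambda>n. 2 * e n + 2 * (\<epsilon> n)\<^sup>2 * \<mu>) \<longlonglongrightarrow> 2 * 0 + 2 * 0\<^sup>2 * \<mu>"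
    using \<open>e \<longlonglongrightarrow> 0\<close> by (intro tendsto_intros) (simp_all add: coeff_l1_def)
  then have bound_lim: "(\<lambda>n. ennreal (2 * e n + 2 * (\<epsilon> n)\<^sup>2 * \<mu>)) \<longlonglongrightarrow> 0"
    using tendsto_ennrealI by fastforce
  have "unit_ball_energy N g \<le> ennreal (2 * e n + 2 * (\<epsilon> n)\<^sup>2 * \<mu>)" for n
  proof -
    have "unit_ball_energy N g \<le> 2 * unit_ball_energy N (D n) + ennreal (2 * (\<epsilon> n)\<^sup>2) * ennreal \<mu>"
      using unit_ball_energy_perturb[of N g "D n"] \<mu>(1) by (simp add: \<epsilon>_def)
    also have "\<dots> \<le> 2 * ennreal (e n) + ennreal (2 * (\<epsilon> n)\<^sup>2) * ennreal \<mu>"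
      using small(1)[of n] by (intro add_right_mono mult_left_mono) auto
    also have "\<dots> = ennreal (2 * e n + 2 * (\<epsilon> n)\<^sup>2 * \<mu>)"
      using small(2)[of n] \<mu>(2) by (simp add: ennreal_plus ennreal_mult)
    finally show ?thesis .
  qed
  then have "unit_ball_energy N g \<le> 0"
    by (intro LIMSEQ_le_const[OF bound_lim]) auto
  then show ?thesis by simp
qed

lemma normalize_small_energy:
  assumes "unit_ball_energy N c < ennreal (\<epsilon> * (coeff_l1 N c)\<^sup>2)" "0 < \<epsilon>"
  shows "\<exists>d. coeff_l1 N d = 1 \<and> unit_ball_energy N d \<le> ennreal \<epsilon>"
proof -
  have l1_pos: "0 < coeff_l1 N c"
    using assms(1) coeff_l1_nonneg[of N c] by (cases "coeff_l1 N c = 0") auto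
  define d where "d = (\<lambda>ab. inverse (coeff_l1 N c) * c ab)"
  have "coeff_l1 N d = 1"
    using l1_pos by (simp add: d_def coeff_l1_scale)
  moreover have "unit_ball_energy N d = ennreal ((inverse (coeff_l1 N c))\<^sup>2) * unit_ball_energy N c"
    unfolding d_def by (rule unit_ball_energy_scale)
  then have "unit_ball_energy N d
      \<le> ennreal ((inverse (coeff_l1 N c))\<^sup>2) * ennreal (\<epsilon> * (coeff_l1 N c)\<^sup>2)"
    using assms(1) by (simp add: mult_left_mono)
  then have "unit_ball_energy N d \<le> ennreal \<epsilon>"
    using l1_pos assms(2) by (simp add: ennreal_mult[symmetric] power_inverse field_simps)
  ultimately show ?thesis by blast
qed

lemma coeffs_convergent_subseq:
  fixes D :: "nat \<Rightarrow> nat \<times> nat \<Rightarrow> real"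
  assumes "\<And>n. coeff_l1 N (D n) \<le> B"
  obtains g s where "strict_mono s" "\<forall>ab\<in>mono_idx N. (\<lambda>n. D (s n) ab) \<longlonglongrightarrow> g ab"
proof -
  have bounded: "bounded ((\<lambda>d. d ab) ` range D)" if "ab \<in> mono_idx N" for ab
  proof -
    have "\<bar>D n ab\<bar> \<le> coeff_l1 N (D n)" for n
      unfolding coeff_l1_def using that by (intro member_le_sum) auto
    then show ?thesis
      using assms by (auto simp: bounded_iff intro: order.trans)
  qed
  have "\<forall>\<delta>\<subseteq>mono_idx N. \<exists>g s. strict_mono s \<and>
      (\<forall>\<epsilon>>0. \<forall>\<^sub>F n in sequentially. \<forall>ab\<in>\<delta>. dist (D (s n) ab) (g ab) < \<epsilon>)"
    by (rule compact_lemma_general[where proj = "\<lambda>d ab. d ab" and unproj = id and f = D])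
      (simp_all add: bounded)
  then obtain g s where s: "strict_mono s"
    and conv: "\<forall>\<epsilon>>0. \<forall>\<^sub>F n in sequentially. \<forall>ab\<in>mono_idx N. dist (D (s n) ab) (g ab) < \<epsilon>"
    by blast
  have "\<forall>ab\<in>mono_idx N. (\<lambda>n. D (s n) ab) \<longlonglongrightarrow> g ab"
    using conv by (auto simp: tendsto_iff elim!: eventually_mono)
  with s show ?thesis by (rule that)
qed

text \<open>All norms on the finite-dimensional coefficient space are equivalent; the usual compactness
  argument is run on a normalised sequence of coefficients with vanishing energy.\<close>
lemma coeff_l1_sq_le_unit_ball_energy:
  "\<exists>\<alpha>>0. \<forall>c. ennreal (\<alpha> * (coeff_l1 N c)\<^sup>2) \<le> unit_ball_energy N c"
proof (rule ccontr)
  assume "\<not> ?thesis"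
  then have "\<exists>d. coeff_l1 N d = 1 \<and> unit_ball_energy N d \<le> ennreal (inverse (real (Suc n)))" for n
    using normalize_small_energy[of N _ "inverse (real (Suc n))"] by (force simp: not_le)
  then obtain D where D: "\<And>n. coeff_l1 N (D n) = 1"
    "\<And>n. unit_ball_energy N (D n) \<le> ennreal (inverse (real (Suc n)))"
    by metis
  have "coeff_l1 N (D n) \<le> 1" for n
    using D(1) by simp
  then obtain g s where s: "strict_mono s" and lim: "\<forall>ab\<in>mono_idx N. (\<lambda>n. D (s n) ab) \<longlonglongrightarrow> g ab"
    by (rule coeffs_convergent_subseq)
  have "(\<lambda>n. coeff_l1 N (D (s n))) \<longlonglongrightarrow> coeff_l1 N g"
    unfolding coeff_l1_def using lim by (intro tendsto_intros) auto
  then have "coeff_l1 N g = 1"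
    using D(1) by (simp add: LIMSEQ_const_iff)
  moreover have "unit_ball_energy N g = 0"
  proof (rule unit_ball_energy_eq_0_of_limit[OF lim])
    show "(\<lambda>n. inverse (real (Suc (s n)))) \<longlonglongrightarrow> 0"
      using LIMSEQ_subseq_LIMSEQ[OF LIMSEQ_inverse_real_of_nat s] by (simp add: comp_def)
  qed (use D(2) in auto)
  then have "\<forall>ab\<in>mono_idx N. g ab = 0"
    using unit_ball_energy_eq_0_imp_coeff_zero by blast
  then have "coeff_l1 N g = 0"
    by (simp add: coeff_l1_def)
  ultimately show False by simp
qed

lemma is_bipoly_iff: "is_bipoly N p \<longleftrightarrow> (\<exists>c. \<forall>x. p x = bipoly N c x)"
  by (simp add: is_bipoly_def fun_eq_iff)

lemma sum_atMost_if_le: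
  assumes "a \<le> (N :: nat)"
  shows "(\<Sum>i\<le>N. if i \<le> a then f i else 0) = (\<Sum>i\<le>a. f i)"
proof -
  have "(\<Sum>i\<le>N. if i \<le> a then f i else 0) = (\<Sum>i\<in>{..N} \<inter> {i. i \<le> a}. f i)"
    by (subst sum.inter_restrict) auto
  also have "{..N} \<inter> {i. i \<le> a} = {..a}"
    using assms by auto
  finally show ?thesis .
qed

lemma poly2_imp_is_bipoly:
  assumes "poly2 k p"
  shows "is_bipoly k p"
proof -
  obtain c where c: "\<And>x. p x = (\<Sum>i\<le>k. \<Sum>j\<le>k - i. c i j * fst x ^ i * snd x ^ j)"
    using assms unfolding poly2_def by blast
  have "bipoly k (\<lambda>ab. if snd ab \<le> k - fst ab then c (fst ab) (snd ab) else 0) x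
      = (\<Sum>a\<le>k. \<Sum>b\<le>k. if b \<le> k - a then c a b * fst x ^ a * snd x ^ b else 0)" for x
    unfolding bipoly_def sum_mono_idx by (intro sum.cong refl) auto
  also have "\<dots> x = p x" for x
    unfolding c by (intro sum.cong refl sum_atMost_if_le) auto
  finally have "p x = bipoly k (\<lambda>ab. if snd ab \<le> k - fst ab then c (fst ab) (snd ab) else 0) x" for x
    by simp
  then show ?thesis by (auto simp: is_bipoly_iff)
qed

lemma is_bipoly_mono:
  assumes "is_bipoly N p" "N \<le> M"
  shows "is_bipoly M p"
proof -
  obtain c where c: "p = bipoly N c" using assms(1) unfolding is_bipoly_def by blast
  have "bipoly N c x = bipoly M (\<lambda>ab. if ab \<in> mono_idx N then c ab else 0) x" for x
    unfolding bipoly_def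
    by (rule sum.mono_neutral_cong_left) (use assms(2) in \<open>auto simp: mono_idx_def\<close>)
  then show ?thesis unfolding c is_bipoly_iff by metis
qed

lemma is_bipoly_add:
  assumes "is_bipoly N p" "is_bipoly N q"
  shows "is_bipoly N (\<lambda>x. p x + q x)"
proof -
  obtain c d where "p = bipoly N c" "q = bipoly N d"
    using assms unfolding is_bipoly_def by blast
  then have "p x + q x = bipoly N (\<lambda>ab. c ab + d ab) x" for x
    unfolding bipoly_def by (simp add: sum.distrib algebra_simps)
  then show ?thesis by (auto simp: is_bipoly_iff)
qed

lemma bipoly_swap: "bipoly N c (prod.swap x) = bipoly N (c \<circ> prod.swap) x"
  unfolding bipoly_def sum_mono_idx by (subst sum.swap) (simp add: mult_ac)

lemma is_bipoly_swap: "is_bipoly N p \<Longrightarrow> is_bipoly N (\<lambda>x. p (prod.swap x))"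
  unfolding is_bipoly_iff by (metis bipoly_swap)

lemma is_bipoly_mult_fst:
  assumes "is_bipoly N p"
  shows "is_bipoly (Suc N) (\<lambda>x. fst x * p x)"
proof -
  obtain c where c: "p = bipoly N c" using assms unfolding is_bipoly_def by blast
  define c' where "c' ab = (case fst ab of 0 \<Rightarrow> 0 | Suc a \<Rightarrow> if snd ab \<le> N then c (a, snd ab) else 0)"
    for ab
  have "x * bipoly N c (x, y) = bipoly (Suc N) c' (x, y)" for x y
  proof -
    have "bipoly (Suc N) c' (x, y) = (\<Sum>a\<le>N. (\<Sum>b\<le>Suc N. c' (Suc a, b) * y ^ b) * x ^ Suc a)"
      unfolding bipoly_by_powers_fst by (subst sum.atMost_Suc_shift) (simp add: c'_def)
    also have "\<dots> = (\<Sum>a\<le>N. (\<Sum>b\<le>N. c (a, b) * y ^ b) * x ^ Suc a)"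
      by (simp add: c'_def)
    finally show ?thesis
      by (simp add: bipoly_by_powers_fst sum_distrib_left mult_ac)
  qed
  then show ?thesis unfolding c is_bipoly_iff by (metis prod.collapse)
qed

lemma is_bipoly_mult_snd:
  assumes "is_bipoly N p"
  shows "is_bipoly (Suc N) (\<lambda>x. snd x * p x)"
proof -
  have "is_bipoly (Suc N) (\<lambda>x. fst x * p (prod.swap x))"
    using assms by (intro is_bipoly_mult_fst is_bipoly_swap)
  then show ?thesis
    using is_bipoly_swap by fastforce
qed

lemma RT_components_is_bipoly:
  assumes "RT k v"
  shows "is_bipoly (Suc k) (\<lambda>x. fst (v x))" "is_bipoly (Suc k) (\<lambda>x. snd (v x))"
proof -
  obtain p1 p2 q where pq: "poly2 k p1" "poly2 k p2" "poly2 k q"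
    "\<And>x. v x = (p1 x + fst x * q x, p2 x + snd x * q x)"
    using assms unfolding RT_def by blast
  have "is_bipoly (Suc k) p1" "is_bipoly (Suc k) p2"
    using pq(1,2) by (auto intro: is_bipoly_mono poly2_imp_is_bipoly)
  moreover have "is_bipoly (Suc k) (\<lambda>x. fst x * q x)" "is_bipoly (Suc k) (\<lambda>x. snd x * q x)"
    using pq(3) by (auto intro: is_bipoly_mult_fst is_bipoly_mult_snd poly2_imp_is_bipoly)
  ultimately show "is_bipoly (Suc k) (\<lambda>x. fst (v x))" "is_bipoly (Suc k) (\<lambda>x. snd (v x))"
    by (simp_all add: pq(4) is_bipoly_add)
qed

lemma poly_eq_sum_coeffs:
  fixes P :: "real poly"
  assumes "degree P \<le> N"
  shows "poly P t = (\<Sum>i\<le>N. coeff P i * t ^ i)"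
proof -
  have "poly P t = poly (\<Sum>i\<le>N. monom (coeff P i) i) t"
    using poly_as_sum_of_monoms'[OF assms] by simp
  then show ?thesis by (simp add: poly_sum poly_monom)
qed

lemma is_bipoly_sum_of_products:
  assumes "\<And>ab. ab \<in> mono_idx N \<Longrightarrow> degree (P ab) \<le> N \<and> degree (Q ab) \<le> N"
  shows "is_bipoly N (\<lambda>y. \<Sum>ab\<in>mono_idx N. c ab * poly (P ab) (fst y) * poly (Q ab) (snd y))"
proof -
  define c' where "c' ij = (\<Sum>ab\<in>mono_idx N. c ab * coeff (P ab) (fst ij) * coeff (Q ab) (snd ij))" for ij
  have "(\<Sum>ab\<in>mono_idx N. c ab * poly (P ab) (fst y) * poly (Q ab) (snd y)) = bipoly N c' y" for y
  proof -
    have "(\<Sum>ab\<in>mono_idx N. c ab * poly (P ab) (fst y) * poly (Q ab) (snd y))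
        = (\<Sum>ab\<in>mono_idx N. \<Sum>ij\<in>mono_idx N.
             c ab * coeff (P ab) (fst ij) * coeff (Q ab) (snd ij) * fst y ^ fst ij * snd y ^ snd ij)"
    proof (intro sum.cong refl)
      fix ab assume "ab \<in> mono_idx N"
      then have "degree (P ab) \<le> N" "degree (Q ab) \<le> N" using assms by auto
      then show "c ab * poly (P ab) (fst y) * poly (Q ab) (snd y) = (\<Sum>ij\<in>mono_idx N.
          c ab * coeff (P ab) (fst ij) * coeff (Q ab) (snd ij) * fst y ^ fst ij * snd y ^ snd ij)"
        by (simp add: poly_eq_sum_coeffs sum_mono_idx sum_product sum_distrib_left mult_ac)
    qed
    also have "\<dots> = bipoly N c' y"
      unfolding bipoly_def c'_def by (subst sum.swap) (simp add: sum_distrib_right)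
    finally show ?thesis .
  qed
  then show ?thesis by (auto simp: is_bipoly_iff)
qed

lemma degree_linear_power_le: "degree ([:u, w:] ^ a) \<le> a"
  by (rule order.trans[OF degree_power_le]) simp

lemma is_bipoly_affine:
  assumes "is_bipoly N p"
  shows "is_bipoly N (\<lambda>y. p (x0 + r *\<^sub>R y))"
proof -
  obtain c where c: "p = bipoly N c" using assms unfolding is_bipoly_def by blast
  have "p (x0 + r *\<^sub>R y) = (\<Sum>ab\<in>mono_idx N.
      c ab * poly ([:fst x0, r:] ^ fst ab) (fst y) * poly ([:snd x0, r:] ^ snd ab) (snd y))" for y
    by (simp add: c bipoly_def mult.assoc ac_simps)
  moreover have "is_bipoly N (\<lambda>y. \<Sum>ab\<in>mono_idx N.
      c ab * poly ([:fst x0, r:] ^ fst ab) (fst y) * poly ([:snd x0, r:] ^ snd ab) (snd y))"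
    by (intro is_bipoly_sum_of_products conjI order.trans[OF degree_linear_power_le])
      (auto simp: mono_idx_def)
  ultimately show ?thesis by simp
qed

definition line_poly :: "nat \<Rightarrow> (nat \<times> nat \<Rightarrow> real) \<Rightarrow> pt \<Rightarrow> pt \<Rightarrow> real poly" where
  "line_poly N c y d =
     (\<Sum>ab\<in>mono_idx N. smult (c ab) ([:fst y, fst d:] ^ fst ab * [:snd y, snd d:] ^ snd ab))"

lemma poly_line_poly: "poly (line_poly N c y d) t = bipoly N c (y + t *\<^sub>R d)"
  by (simp add: line_poly_def bipoly_def poly_sum mult_ac)

lemma higher_deriv_poly: "(deriv ^^ j) (poly (P :: real poly)) = poly ((pderiv ^^ j) P)"
proof (induction j)
  case (Suc j)
  have "deriv (poly Q) = poly (pderiv Q)" for Q :: "real poly"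
    by (rule ext) (rule DERIV_imp_deriv[OF poly_DERIV])
  then show ?case using Suc by simp
qed simp

lemma higher_deriv_poly_at_0: "(deriv ^^ j) (poly (P :: real poly)) 0 = fact j * coeff P j"
  by (simp add: higher_deriv_poly poly_0_coeff_0 coeff_higher_pderiv pochhammer_fact)

lemma abs_coeff_linear_mult_le:
  fixes P :: "real poly"
  assumes "\<And>j. \<bar>coeff P j\<bar> \<le> B" "\<bar>u\<bar> \<le> M" "\<bar>w\<bar> \<le> M"
  shows "\<bar>coeff ([:u, w:] * P) j\<bar> \<le> 2 * M * B"
proof -
  have "0 \<le> B" "0 \<le> M" using assms(1)[of 0] assms(2) by linarith+
  have "coeff ([:u, w:] * P) j = u * coeff P j + (case j of 0 \<Rightarrow> 0 | Suc i \<Rightarrow> w * coeff P i)"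
    by (cases j) (simp_all add: mult_pCons_left)
  moreover have "\<bar>u * coeff P j\<bar> \<le> M * B"
    unfolding abs_mult using assms by (intro mult_mono) auto
  moreover have "\<bar>case j of 0 \<Rightarrow> 0 | Suc i \<Rightarrow> w * coeff P i\<bar> \<le> M * B"
  proof (cases j)
    case (Suc i)
    have "\<bar>w\<bar> * \<bar>coeff P i\<bar> \<le> M * B"
      using assms by (intro mult_mono) auto
    then show ?thesis by (simp add: Suc abs_mult)
  qed (use \<open>0 \<le> B\<close> \<open>0 \<le> M\<close> in simp)
  ultimately show ?thesis
    using abs_triangle_ineq[of "u * coeff P j" "case j of 0 \<Rightarrow> 0 | Suc i \<Rightarrow> w * coeff P i"]
    by linarith
qed

lemma abs_coeff_linear_power_mult_le:
  fixes P :: "real poly"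
  assumes "\<And>j. \<bar>coeff P j\<bar> \<le> B" "\<bar>u\<bar> \<le> M" "\<bar>w\<bar> \<le> M"
  shows "\<bar>coeff ([:u, w:] ^ a * P) j\<bar> \<le> (2 * M) ^ a * B"
proof (induction a arbitrary: j)
  case (Suc a)
  have "\<bar>coeff ([:u, w:] * ([:u, w:] ^ a * P)) j\<bar> \<le> 2 * M * ((2 * M) ^ a * B)"
    by (rule abs_coeff_linear_mult_le[OF Suc.IH assms(2,3)])
  then show ?case by (simp only: power_Suc mult.assoc)
qed (use assms(1) in simp)

lemma abs_coeff_line_poly_le:
  assumes "\<bar>fst y\<bar> \<le> M" "\<bar>snd y\<bar> \<le> M" "\<bar>fst d\<bar> \<le> M" "\<bar>snd d\<bar> \<le> M" "1 \<le> M"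
  shows "\<bar>coeff (line_poly N c y d) j\<bar> \<le> coeff_l1 N c * (2 * M) ^ (2 * N)"
proof -
  have mono_bound: "\<bar>coeff ([:fst y, fst d:] ^ a * [:snd y, snd d:] ^ b) j\<bar> \<le> (2 * M) ^ (2 * N)"
    if "a \<le> N" "b \<le> N" for a b j
  proof -
    have "\<bar>coeff ([:snd y, snd d:] ^ b * 1) j\<bar> \<le> (2 * M) ^ b * 1" for j
      by (rule abs_coeff_linear_power_mult_le) (simp_all add: coeff_1 assms(2,4))
    then have "\<bar>coeff ([:fst y, fst d:] ^ a * [:snd y, snd d:] ^ b) j\<bar> \<le> (2 * M) ^ a * ((2 * M) ^ b * 1)"
      by (intro abs_coeff_linear_power_mult_le assms(1,3)) simp
    also have "\<dots> = (2 * M) ^ (a + b)"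
      by (simp add: power_add)
    also have "\<dots> \<le> (2 * M) ^ (2 * N)"
      using that assms(5) by (intro power_increasing) auto
    finally show ?thesis .
  qed
  have "\<bar>coeff (line_poly N c y d) j\<bar>
      \<le> (\<Sum>ab\<in>mono_idx N. \<bar>c ab\<bar> * \<bar>coeff ([:fst y, fst d:] ^ fst ab * [:snd y, snd d:] ^ snd ab) j\<bar>)"
    unfolding line_poly_def coeff_sum by (rule order.trans[OF sum_abs]) (simp add: abs_mult)
  also have "\<dots> \<le> (\<Sum>ab\<in>mono_idx N. \<bar>c ab\<bar> * (2 * M) ^ (2 * N))"
    by (intro sum_mono mult_left_mono mono_bound) (auto simp: mono_idx_def)
  finally show ?thesis by (simp add: coeff_l1_def sum_distrib_right)
qed

lemma higher_deriv_along_line_le: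
  assumes p: "\<And>z. p (x0 + r *\<^sub>R z) = bipoly N c z" and "0 < r"
    and "\<bar>fst y\<bar> \<le> M" "\<bar>snd y\<bar> \<le> M" "\<bar>fst d\<bar> \<le> M" "\<bar>snd d\<bar> \<le> M" "1 \<le> M"
  shows "\<bar>(deriv ^^ j) (\<lambda>t. p (x0 + r *\<^sub>R y + t *\<^sub>R d)) 0\<bar>
    \<le> fact j / r ^ j * (coeff_l1 N c * (2 * M) ^ (2 * N))"
proof -
  have "p (x0 + r *\<^sub>R y + t *\<^sub>R d) = poly (pcompose (line_poly N c y d) [:0, 1 / r:]) t" for t
  proof -
    have "x0 + r *\<^sub>R y + t *\<^sub>R d = x0 + r *\<^sub>R (y + (t / r) *\<^sub>R d)"
      using \<open>0 < r\<close> by (simp add: algebra_simps)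
    then show ?thesis by (simp only:) (simp add: poly_pcompose poly_line_poly p)
  qed
  then have "(\<lambda>t. p (x0 + r *\<^sub>R y + t *\<^sub>R d)) = poly (pcompose (line_poly N c y d) [:0, 1 / r:])"
    by (rule ext)
  then have "(deriv ^^ j) (\<lambda>t. p (x0 + r *\<^sub>R y + t *\<^sub>R d)) 0 = fact j * ((1 / r) ^ j * coeff (line_poly N c y d) j)"
    by (simp add: higher_deriv_poly_at_0 coeff_pcompose_linear)
  moreover have "\<bar>coeff (line_poly N c y d) j\<bar> \<le> coeff_l1 N c * (2 * M) ^ (2 * N)"
    using assms(3-) by (rule abs_coeff_line_poly_le)
  ultimately show ?thesis
    using \<open>0 < r\<close> by (auto simp: abs_mult power_one_over intro!: divide_right_mono mult_left_mono)
qed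

lemma norm_dirderiv_le:
  assumes c1: "\<And>z. fst (v (x0 + r *\<^sub>R z)) = bipoly N c1 z"
    and c2: "\<And>z. snd (v (x0 + r *\<^sub>R z)) = bipoly N c2 z"
    and "0 < r" "0 \<le> R" "norm (x - x0) \<le> R * r" "norm d = 1"
  shows "norm (dirderiv j d v x)
    \<le> fact j / r ^ j * ((2 * (1 + R)) ^ (2 * N) * (coeff_l1 N c1 + coeff_l1 N c2))"
proof -
  define y where "y = (1 / r) *\<^sub>R (x - x0)"
  have x: "x = x0 + r *\<^sub>R y" using \<open>0 < r\<close> by (simp add: y_def)
  have "norm y \<le> R" using assms(3,5) by (simp add: y_def divide_le_eq mult.commute)
  then have y_bounds: "\<bar>fst y\<bar> \<le> 1 + R" "\<bar>snd y\<bar> \<le> 1 + R"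
    using norm_fst_le[of "fst y" "snd y"] norm_snd_le[of "snd y" "fst y"] by auto
  have d_bounds: "\<bar>fst d\<bar> \<le> 1 + R" "\<bar>snd d\<bar> \<le> 1 + R"
    using assms(4,6) norm_fst_le[of "fst d" "snd d"] norm_snd_le[of "snd d" "fst d"] by auto
  have "norm (dirderiv j d v x)
      \<le> \<bar>(deriv ^^ j) (\<lambda>t. fst (v (x + t *\<^sub>R d))) 0\<bar> + \<bar>(deriv ^^ j) (\<lambda>t. snd (v (x + t *\<^sub>R d))) 0\<bar>"
    unfolding dirderiv_def by (rule order.trans[OF norm_Pair_le]) simp
  also have "\<dots> \<le> fact j / r ^ j * (coeff_l1 N c1 * (2 * (1 + R)) ^ (2 * N))
      + fact j / r ^ j * (coeff_l1 N c2 * (2 * (1 + R)) ^ (2 * N))"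
    unfolding x using assms(3,4) y_bounds d_bounds
    by (intro add_mono higher_deriv_along_line_le[OF c1] higher_deriv_along_line_le[OF c2]) auto
  finally show ?thesis by (simp add: algebra_simps)
qed

lemma nn_integral_cball_rescale:
  fixes x0 :: pt
  assumes [measurable]: "f \<in> borel_measurable borel" and "0 < r"
  shows "(\<integral>\<^sup>+ x\<in>cball x0 r. f x \<partial>lborel)
    = ennreal (r\<^sup>2) * (\<integral>\<^sup>+ y\<in>cball 0 1. f (x0 + r *\<^sub>R y) \<partial>lborel)"
proof -
  have "indicator (cball x0 r) (x0 + r *\<^sub>R y) = (indicator (cball (0 :: pt) 1) y :: ennreal)" for y
    using \<open>0 < r\<close> by (simp add: indicator_def dist_norm)
  then show ?thesis
    using \<open>0 < r\<close> by (subst lborel_affine[of r x0])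
      (simp_all add: nn_integral_density nn_integral_distr nn_integral_cmult power2_eq_square)
qed

lemma is_bipoly_measurable [measurable_dest]: "is_bipoly N p \<Longrightarrow> p \<in> borel_measurable borel"
  unfolding is_bipoly_def by auto

lemma coeff_l1_sq_le_integral_cball:
  assumes energy: "\<And>c. ennreal (\<alpha> * (coeff_l1 N c)\<^sup>2) \<le> unit_ball_energy N c" and "0 \<le> \<alpha>"
    and c: "\<And>z. p (x0 + r *\<^sub>R z) = bipoly N c z" and "0 < r" and [measurable]: "p \<in> borel_measurable borel"
  shows "ennreal (\<alpha> * (r * coeff_l1 N c)\<^sup>2) \<le> (\<integral>\<^sup>+ x\<in>cball x0 r. ennreal ((p x)\<^sup>2) \<partial>lborel)"
proof -
  have "ennreal (\<alpha> * (r * coeff_l1 N c)\<^sup>2) = ennreal (r\<^sup>2) * ennreal (\<alpha> * (coeff_l1 N c)\<^sup>2)"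
    using \<open>0 \<le> \<alpha>\<close> by (simp add: ennreal_mult[symmetric] power_mult_distrib mult_ac)
  also have "\<dots> \<le> ennreal (r\<^sup>2) * unit_ball_energy N c"
    by (intro mult_left_mono energy) simp
  also have "\<dots> = (\<integral>\<^sup>+ x\<in>cball x0 r. ennreal ((p x)\<^sup>2) \<partial>lborel)"
    unfolding unit_ball_energy_def c[symmetric]
    using nn_integral_cball_rescale[of "\<lambda>x. ennreal ((p x)\<^sup>2)" r x0] \<open>0 < r\<close> by simp
  finally show ?thesis .
qed

lemma ennreal_sq_sum_le:
  assumes "ennreal (\<alpha> * s1\<^sup>2) \<le> J" "ennreal (\<alpha> * s2\<^sup>2) \<le> J" "0 < \<alpha>"
  shows "ennreal ((s1 + s2)\<^sup>2) \<le> ennreal (4 / \<alpha>) * J"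
proof -
  have "ennreal ((s1 + s2)\<^sup>2) \<le> ennreal (2 / \<alpha> * (\<alpha> * s1\<^sup>2 + \<alpha> * s2\<^sup>2))"
  proof (rule ennreal_leI)
    have "2 / \<alpha> * (\<alpha> * s1\<^sup>2 + \<alpha> * s2\<^sup>2) = 2 * s1\<^sup>2 + 2 * s2\<^sup>2"
      using \<open>0 < \<alpha>\<close> by (simp add: field_simps)
    then show "(s1 + s2)\<^sup>2 \<le> 2 / \<alpha> * (\<alpha> * s1\<^sup>2 + \<alpha> * s2\<^sup>2)"
      using square_sum_le[of s1 s2] by simp
  qed
  also have "\<dots> = ennreal (2 / \<alpha>) * (ennreal (\<alpha> * s1\<^sup>2) + ennreal (\<alpha> * s2\<^sup>2))"
  proof -
    have nonneg: "0 \<le> 2 / \<alpha>" "0 \<le> \<alpha> * s1\<^sup>2" "0 \<le> \<alpha> * s2\<^sup>2"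
      using \<open>0 < \<alpha>\<close> by simp_all
    show ?thesis
      by (simp only: ennreal_mult[OF nonneg(1) add_nonneg_nonneg[OF nonneg(2,3)]]
          ennreal_plus[OF nonneg(2,3)])
  qed
  also have "\<dots> \<le> ennreal (2 / \<alpha>) * (J + J)"
    by (intro mult_left_mono add_mono assms(1,2)) simp
  also have "\<dots> = ennreal (2 / \<alpha>) * ennreal 2 * J"
    by (simp add: mult_2[symmetric] mult.assoc)
  also have "\<dots> = ennreal (4 / \<alpha>) * J"
    by (subst ennreal_mult''[symmetric]) simp_all
  finally show ?thesis .
qed

lemma ennreal_mult_sq_le:
  assumes "ennreal (s\<^sup>2) \<le> ennreal C * J"
  shows "ennreal ((c * s)\<^sup>2) \<le> ennreal (c\<^sup>2 * C) * J"
proof -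
  have "ennreal ((c * s)\<^sup>2) = ennreal (c\<^sup>2) * ennreal (s\<^sup>2)"
    by (simp add: power_mult_distrib ennreal_mult)
  also have "\<dots> \<le> ennreal (c\<^sup>2) * (ennreal C * J)"
    using assms by (rule mult_left_mono) simp
  also have "\<dots> \<le> ennreal (c\<^sup>2 * C) * J"
    by (cases "0 \<le> C") (auto simp: ennreal_mult mult.assoc ennreal_neg)
  finally show ?thesis .
qed

lemma coeff_l1_pair_sq_le_integral_cball:
  assumes energy: "\<And>c. ennreal (\<alpha> * (coeff_l1 N c)\<^sup>2) \<le> unit_ball_energy N c" and "0 < \<alpha>"
    and v: "is_bipoly N (\<lambda>x. fst (v x))" "is_bipoly N (\<lambda>x. snd (v x))"
    and c1: "\<And>z. fst (v (x0 + r *\<^sub>R z)) = bipoly N c1 z"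
    and c2: "\<And>z. snd (v (x0 + r *\<^sub>R z)) = bipoly N c2 z" and "0 < r"
  shows "ennreal ((r * (coeff_l1 N c1 + coeff_l1 N c2))\<^sup>2)
    \<le> ennreal (4 / \<alpha>) * (\<integral>\<^sup>+ x\<in>cball x0 r. ennreal ((norm (v x))\<^sup>2) \<partial>lborel)"
proof -
  define J where "J = (\<integral>\<^sup>+ x\<in>cball x0 r. ennreal ((norm (v x))\<^sup>2) \<partial>lborel)"
  have component_le_J: "(\<integral>\<^sup>+ x\<in>cball x0 r. ennreal ((f (v x))\<^sup>2) \<partial>lborel) \<le> J"
    if "\<And>z. (f z)\<^sup>2 \<le> (norm z)\<^sup>2" for f :: "pt \<Rightarrow> real"
    unfolding J_def using that by (intro nn_integral_mono) (auto split: split_indicator intro!: ennreal_leI)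
  have "ennreal (\<alpha> * (r * coeff_l1 N c1)\<^sup>2) \<le> J"
    using coeff_l1_sq_le_integral_cball[OF energy _ c1 \<open>0 < r\<close> is_bipoly_measurable[OF v(1)]] \<open>0 < \<alpha>\<close>
      component_le_J[of fst] by (force simp: norm_Pair)
  moreover have "ennreal (\<alpha> * (r * coeff_l1 N c2)\<^sup>2) \<le> J"
    using coeff_l1_sq_le_integral_cball[OF energy _ c2 \<open>0 < r\<close> is_bipoly_measurable[OF v(2)]] \<open>0 < \<alpha>\<close>
      component_le_J[of snd] by (force simp: norm_Pair)
  ultimately show ?thesis
    using ennreal_sq_sum_le[OF _ _ \<open>0 < \<alpha>\<close>] unfolding J_def by (simp add: distrib_left)
qed

text \<open>The quantity \<open>A\<close> below is, up to a constant, the coefficient norm of \<open>v\<close> rescaled to the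
  ball \<open>cball x0 r\<close>: it bounds all directional derivatives near the ball and is controlled by the
  \<open>L\<^sup>2\<close> norm of \<open>v\<close> on the ball.\<close>
definition inverse_estimate_constant :: "nat \<Rightarrow> real \<Rightarrow> real \<Rightarrow> bool" where
  "inverse_estimate_constant N R C \<longleftrightarrow>
     (\<forall>v x0 r. is_bipoly N (\<lambda>x. fst (v x)) \<longrightarrow> is_bipoly N (\<lambda>x. snd (v x)) \<longrightarrow> 0 < r \<longrightarrow>
        (\<exists>A\<ge>0. (\<forall>j x d. norm (x - x0) \<le> R * r \<longrightarrow> norm d = 1 \<longrightarrow>
                   norm (dirderiv j d v x) \<le> fact j / r ^ j * A) \<and>
                ennreal ((r * A)\<^sup>2) \<le> ennreal C * (\<integral>\<^sup>+ x\<in>cball x0 r. ennreal ((norm (v x))\<^sup>2) \<partial>lborel)))"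

lemma inverse_estimate_constant_exists:
  assumes "0 \<le> R"
  shows "\<exists>C\<ge>0. inverse_estimate_constant N R C"
proof -
  obtain \<alpha> where \<alpha>: "0 < \<alpha>" "\<And>c. ennreal (\<alpha> * (coeff_l1 N c)\<^sup>2) \<le> unit_ball_energy N c"
    using coeff_l1_sq_le_unit_ball_energy by blast
  define W where "W = (2 * (1 + R)) ^ (2 * N)"
  have "inverse_estimate_constant N R (W\<^sup>2 * (4 / \<alpha>))"
    unfolding inverse_estimate_constant_def
  proof (intro allI impI)
    fix v :: "pt \<Rightarrow> pt" and x0 :: pt and r :: real
    assume v: "is_bipoly N (\<lambda>x. fst (v x))" "is_bipoly N (\<lambda>x. snd (v x))" and "0 < r"
    obtain c1 c2 where c1: "\<And>z. fst (v (x0 + r *\<^sub>R z)) = bipoly N c1 z"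
      and c2: "\<And>z. snd (v (x0 + r *\<^sub>R z)) = bipoly N c2 z"
      using is_bipoly_affine[OF v(1), of x0 r] is_bipoly_affine[OF v(2), of x0 r]
      unfolding is_bipoly_iff by blast
    define A where "A = W * (coeff_l1 N c1 + coeff_l1 N c2)"
    have "norm (dirderiv j d v x) \<le> fact j / r ^ j * A"
      if "norm (x - x0) \<le> R * r" "norm d = 1" for j x d
      unfolding A_def W_def by (rule norm_dirderiv_le[OF c1 c2 \<open>0 < r\<close> assms that])
    moreover have "ennreal ((r * A)\<^sup>2)
        \<le> ennreal (W\<^sup>2 * (4 / \<alpha>)) * (\<integral>\<^sup>+ x\<in>cball x0 r. ennreal ((norm (v x))\<^sup>2) \<partial>lborel)"
      using ennreal_mult_sq_le[OF coeff_l1_pair_sq_le_integral_cball[OF \<alpha>(2,1) v c1 c2 \<open>0 < r\<close>], of W]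
      by (simp add: A_def mult_ac)
    moreover have "0 \<le> A"
      using assms by (simp add: A_def W_def coeff_l1_nonneg)
    ultimately show "\<exists>A\<ge>0. (\<forall>j x d. norm (x - x0) \<le> R * r \<longrightarrow> norm d = 1 \<longrightarrow>
                norm (dirderiv j d v x) \<le> fact j / r ^ j * A) \<and>
             ennreal ((r * A)\<^sup>2)
               \<le> ennreal (W\<^sup>2 * (4 / \<alpha>)) * (\<integral>\<^sup>+ x\<in>cball x0 r. ennreal ((norm (v x))\<^sup>2) \<partial>lborel)"
      by blast
  qed
  then show ?thesis
    using \<alpha>(1) by (intro exI[of _ "W\<^sup>2 * (4 / \<alpha>)"]) simp
qed

lemma not_collinear_imp_distinct:
  assumes "\<not> collinear {a, b, c :: pt}"
  shows "a \<noteq> b" "a \<noteq> c" "b \<noteq> c"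
  using assms by (auto simp: insert_commute)

lemma chord_parallel_to_side_le:
  assumes nc: "\<not> collinear {a, b, c :: pt}"
    and "p \<in> convex hull {a, b, c}" "q \<in> convex hull {a, b, c}" and pq: "p - q = s *\<^sub>R (b - a)"
  shows "\<bar>s\<bar> \<le> 1"
proof -
  obtain u v w where p: "p = u *\<^sub>R a + v *\<^sub>R b + w *\<^sub>R c" "0 \<le> u" "0 \<le> v" "0 \<le> w" "u + v + w = 1"
    using assms(2) unfolding convex_hull_3 by blast
  obtain u' v' w' where q: "q = u' *\<^sub>R a + v' *\<^sub>R b + w' *\<^sub>R c" "0 \<le> u'" "0 \<le> v'" "0 \<le> w'"
    "u' + v' + w' = 1"
    using assms(3) unfolding convex_hull_3 by blast
  have u: "u = 1 - v - w" "u' = 1 - v' - w'" using p(5) q(5) by auto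
  have "p - q = (v - v') *\<^sub>R (b - a) + (w - w') *\<^sub>R (c - a)"
    unfolding p(1) q(1) u by (simp add: algebra_simps)
  then have eq: "(w - w') *\<^sub>R (c - a) = (s - v + v') *\<^sub>R (b - a)"
    using pq by (simp add: algebra_simps)
  have "w = w'"
  proof (rule ccontr)
    assume "w \<noteq> w'"
    define k where "k = (s - v + v') / (w - w')"
    have "c - a = (1 / (w - w')) *\<^sub>R ((w - w') *\<^sub>R (c - a))"
      using \<open>w \<noteq> w'\<close> by simp
    also have "\<dots> = k *\<^sub>R (b - a)"
      unfolding eq k_def by simp
    finally have "c = (1 - k) *\<^sub>R a + (1 - (1 - k)) *\<^sub>R b"
      by (simp add: algebra_simps)
    then have "collinear {a, c, b}"
      unfolding collinear_3_expand by blast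
    then show False using nc by (simp add: insert_commute)
  qed
  then have "s = v - v'"
    using eq not_collinear_imp_distinct(1)[OF nc] by simp
  then show ?thesis using p q by linarith
qed

lemma verts_convex_hull_subset: "verts (convex hull S) \<subseteq> S"
  unfolding verts_def using extreme_point_of_convex_hull by blast

lemma verts_subset: "verts K \<subseteq> K"
  unfolding verts_def extreme_point_of_def by blast

lemma edge_subset:
  assumes "e \<in> edges K" "convex K"
  shows "e \<subseteq> K"
  using assms verts_subset closed_segment_subset unfolding edges_def by blast

lemma triangle_edges_card_le:
  assumes "is_triangle K"
  shows "finite (edges K)" "card (edges K) \<le> 9"
proof -
  obtain a b c where "K = convex hull {a, b, c}"
    using assms unfolding is_triangle_def by blast
  then have vs: "verts K \<subseteq> {a, b, c}" using verts_convex_hull_subset by blast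
  then have fin: "finite (verts K)" by (rule finite_subset) simp
  have "card {a, b, c} \<le> 3" by (auto simp: card_insert_if)
  then have "card (verts K) \<le> 3"
    using card_mono[OF _ vs] by simp
  have sub: "edges K \<subseteq> (\<lambda>(x, y). closed_segment x y) ` (verts K \<times> verts K)"
    unfolding edges_def by auto
  then show "finite (edges K)" using fin by (intro finite_subset[OF sub]) simp
  have "card (edges K) \<le> card ((\<lambda>(x, y). closed_segment x y) ` (verts K \<times> verts K))"
    by (rule card_mono[OF _ sub]) (simp add: fin)
  also have "\<dots> \<le> card (verts K \<times> verts K)"
    by (rule card_image_le) (simp add: fin)
  also have "\<dots> \<le> 3 * 3"
    using mult_le_mono[OF \<open>card (verts K) \<le> 3\<close> \<open>card (verts K) \<le> 3\<close>]
    by (simp add: card_cartesian_product)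
  finally show "card (edges K) \<le> 9" by simp
qed

lemma triple_reorder:
  assumes "a' \<in> {a, b, c}" "b' \<in> {a, b, c}" "a' \<noteq> b'"
  shows "\<exists>c'. {a, b, c} = {a', b', c'}"
  using assms by auto

lemma inball_diameter_le_edge_length:
  assumes nc: "\<not> collinear {a, b, c :: pt}" and K: "K = convex hull {a, b, c}"
    and a'b': "a' \<in> verts K" "b' \<in> verts K" "a' \<noteq> b'" and ball: "cball x0 r \<subseteq> K" and "0 \<le> r"
  shows "2 * r \<le> dist a' b'"
proof -
  have "a' \<in> {a, b, c}" "b' \<in> {a, b, c}"
    using a'b' verts_convex_hull_subset unfolding K by blast+
  then obtain c' where c': "{a, b, c} = {a', b', c'}"
    using triple_reorder a'b'(3) by metis
  define d where "d = dist a' b'"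
  have "0 < d" using a'b'(3) by (simp add: d_def)
  define u where "u = (1 / d) *\<^sub>R (b' - a')"
  have "norm u = 1"
    using \<open>0 < d\<close> by (simp add: u_def d_def dist_norm norm_minus_commute)
  then have "x0 + r *\<^sub>R u \<in> cball x0 r" "x0 - r *\<^sub>R u \<in> cball x0 r"
    using \<open>0 \<le> r\<close> by (simp_all add: dist_norm)
  then have "x0 + r *\<^sub>R u \<in> convex hull {a', b', c'}" "x0 - r *\<^sub>R u \<in> convex hull {a', b', c'}"
    using ball unfolding K c' by blast+
  moreover have "(x0 + r *\<^sub>R u) - (x0 - r *\<^sub>R u) = (2 * r / d) *\<^sub>R (b' - a')"
  proof -
    have "(x0 + r *\<^sub>R u) - (x0 - r *\<^sub>R u) = (2 * r) *\<^sub>R u"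
      by (simp add: scaleR_2 flip: scaleR_scaleR)
    then show ?thesis by (simp add: u_def)
  qed
  ultimately have "\<bar>2 * r / d\<bar> \<le> 1"
    using chord_parallel_to_side_le nc unfolding c' by blast
  then show ?thesis
    using \<open>0 < d\<close> \<open>0 \<le> r\<close> by (simp add: d_def divide_le_eq)
qed

lemma bounded_triangle: "is_triangle K \<Longrightarrow> bounded K"
  unfolding is_triangle_def by (auto intro: compact_imp_bounded finite_imp_compact_convex_hull)

lemma inscribed_radii_bdd_above:
  fixes K :: "pt set"
  assumes "bounded K"
  shows "bdd_above {r. \<exists>x. ball x r \<subseteq> K}"
proof (rule bdd_aboveI)
  fix r assume "r \<in> {r. \<exists>x. ball x r \<subseteq> K}"
  then obtain x where "ball x r \<subseteq> K" by blast
  then have "diameter (ball x r) \<le> diameter K"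
    using assms by (rule diameter_subset)
  then show "r \<le> diameter K"
    using diameter_ge_0[OF assms] by (cases "r < 0") auto
qed

lemma inradius_nonneg: "bounded (K :: pt set) \<Longrightarrow> 0 \<le> inradius K"
  unfolding inradius_def by (rule cSup_upper[OF _ inscribed_radii_bdd_above]) auto

lemma cball_half_inradius_subset:
  assumes "bounded K" "0 < inradius K"
  shows "\<exists>x0. cball x0 (inradius K / 2) \<subseteq> K"
proof -
  have "inradius K / 2 < Sup {r. \<exists>x. ball x r \<subseteq> K}"
    using assms(2) by (simp add: inradius_def)
  moreover have "{r. \<exists>x. ball x r \<subseteq> K} \<noteq> {}"
    by (auto intro!: exI[of _ 0])
  ultimately obtain r where "\<exists>x. ball x r \<subseteq> K" "inradius K / 2 < r"
    using less_cSup_iff[OF _ inscribed_radii_bdd_above[OF assms(1)]] by blast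
  moreover have "cball x0 (inradius K / 2) \<subseteq> ball x0 r" for x0
    using \<open>inradius K / 2 < r\<close> by auto
  ultimately show ?thesis by blast
qed

lemma triangle_diam_pos: "is_triangle K \<Longrightarrow> 0 < diam K"
proof -
  assume "is_triangle K"
  then obtain a b c where nc: "\<not> collinear {a, b, c}" and K: "K = convex hull {a, b, c}"
    unfolding is_triangle_def by blast
  have "a \<in> K" "b \<in> K" unfolding K by (simp_all add: hull_inc)
  then have "dist a b \<le> diam K"
    unfolding diam_def using bounded_triangle[OF \<open>is_triangle K\<close>] by (rule diameter_bounded_bound[rotated])
  moreover have "0 < dist a b" using not_collinear_imp_distinct(1)[OF nc] by simp
  ultimately show ?thesis by linarith
qed

lemma shape_regular_triangle_inball:
  assumes "is_triangle K" and regular: "diam K \<le> \<sigma> * inradius K"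
  shows "0 < diam K" "0 < inradius K" "0 < \<sigma>" "\<exists>x0. cball x0 (inradius K / 2) \<subseteq> K"
proof -
  show "0 < diam K" using assms(1) by (rule triangle_diam_pos)
  then have "0 < \<sigma> * inradius K"
    using regular by linarith
  moreover have "0 \<le> inradius K"
    using bounded_triangle[OF assms(1)] by (rule inradius_nonneg)
  ultimately show "0 < inradius K" "0 < \<sigma>"
    by (auto simp: zero_less_mult_iff)
  then show "\<exists>x0. cball x0 (inradius K / 2) \<subseteq> K"
    using bounded_triangle[OF assms(1)] cball_half_inradius_subset by blast
qed

lemma edge_int_le:
  assumes e: "e \<in> edges K" and "bounded K" "e \<subseteq> K"
    and f: "\<And>x. x \<in> e \<Longrightarrow> f x \<le> B" and "0 \<le> B"
  shows "edge_int e f \<le> ennreal (diam K * B)"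
proof -
  obtain a0 b0 where "a0 \<noteq> b0" "e = closed_segment a0 b0"
    using e unfolding edges_def by blast
  let ?P = "\<lambda>(a, b). a \<noteq> b \<and> e = closed_segment a b"
  have "?P (Eps ?P)"
    by (rule someI[of ?P "(a0, b0)"]) (simp add: \<open>a0 \<noteq> b0\<close> \<open>e = closed_segment a0 b0\<close>)
  then obtain a b where ab: "Eps ?P = (a, b)" "a \<noteq> b" "e = closed_segment a b"
    by (cases "Eps ?P") auto
  have "(\<integral>\<^sup>+ t\<in>{0..1}. ennreal (f (a + t *\<^sub>R (b - a))) \<partial>lborel) \<le> (\<integral>\<^sup>+ t\<in>{0..1 :: real}. ennreal B \<partial>lborel)"
  proof (intro nn_integral_mono)
    fix t :: real
    show "ennreal (f (a + t *\<^sub>R (b - a))) * indicator {0..1} t \<le> ennreal B * indicator {0..1} t"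
    proof (cases "t \<in> {0..1}")
      case True
      have "a + t *\<^sub>R (b - a) = (1 - t) *\<^sub>R a + t *\<^sub>R b"
        by (simp add: algebra_simps)
      then have "a + t *\<^sub>R (b - a) \<in> e"
        using True unfolding ab(3) closed_segment_def by auto
      then show ?thesis using True f by (simp add: ennreal_leI)
    qed simp
  qed
  also have "\<dots> = ennreal B" by (subst nn_integral_cmult_indicator) auto
  finally have "edge_int e f \<le> ennreal (dist a b) * ennreal B"
    unfolding edge_int_def ab(1) by (auto intro: mult_left_mono)
  moreover have "dist a b \<le> diam K"
    unfolding diam_def using \<open>bounded K\<close> \<open>e \<subseteq> K\<close> ab(3) by (intro diameter_bounded_bound) auto
  then have "ennreal (dist a b) * ennreal B \<le> ennreal (diam K) * ennreal B"
    by (intro mult_right_mono ennreal_leI) simp_all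
  ultimately show ?thesis
    using \<open>0 \<le> B\<close> by (simp add: ennreal_mult'')
qed

lemma sum_bedges_le:
  fixes g :: "pt set \<times> pt set \<Rightarrow> ennreal"
  assumes "triangulation T" and g: "\<And>K e. (K, e) \<in> bedges T \<Longrightarrow> g (K, e) \<le> ennreal c * J K"
  shows "(\<Sum>Ke\<in>bedges T. g Ke) \<le> ennreal (9 * c) * (\<Sum>K\<in>T. J K)"
proof -
  have "finite T" and tri: "\<And>K. K \<in> T \<Longrightarrow> is_triangle K"
    using assms(1) by (auto simp: triangulation_def)
  have "(\<Sum>Ke\<in>bedges T. g Ke) \<le> (\<Sum>Ke\<in>Sigma T edges. ennreal c * J (fst Ke))"
  proof (rule order.trans[OF sum_mono sum_mono2])
    show "finite (Sigma T edges)"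
      using \<open>finite T\<close> tri triangle_edges_card_le(1) by blast
  qed (auto simp: bedges_def g)
  also have "\<dots> = (\<Sum>K\<in>T. \<Sum>e\<in>edges K. ennreal c * J K)"
    using \<open>finite T\<close> tri triangle_edges_card_le(1) by (subst sum.Sigma) (auto simp: case_prod_beta)
  also have "\<dots> = (\<Sum>K\<in>T. of_nat (card (edges K)) * (ennreal c * J K))"
    by simp
  also have "\<dots> \<le> (\<Sum>K\<in>T. 9 * (ennreal c * J K))"
    using tri triangle_edges_card_le(2) by (intro sum_mono mult_right_mono) (auto simp flip: of_nat_le_iff)
  also have "\<dots> = ennreal (9 * c) * (\<Sum>K\<in>T. J K)"
    by (cases "0 \<le> c") (auto simp: sum_distrib_left mult.assoc ennreal_mult ennreal_neg)
  finally show ?thesis .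
qed

lemma admissible_element_inball:
  assumes adm: "admissible \<Omega> \<sigma> \<rho> C\<delta> Cn T Mh \<nu>" and "K \<in> T"
  obtains x0 r where "0 < r" "cball x0 r \<subseteq> K" "0 < diam K" "diam K \<le> 2 * \<sigma> * r" "0 < \<sigma>"
    "0 < \<rho>" "0 < meshsize T" "meshsize T \<le> 2 * \<rho> * \<sigma> * r"
proof -
  have tri: "triangulation T" and regular: "diam K \<le> \<sigma> * inradius K"
    and quasi_uniform: "meshsize T \<le> \<rho> * diam K"
    using adm \<open>K \<in> T\<close> unfolding admissible_def by blast+
  have "is_triangle K" "finite T"
    using tri \<open>K \<in> T\<close> by (auto simp: triangulation_def)
  note inball = shape_regular_triangle_inball[OF this(1) regular]
  obtain x0 where x0: "cball x0 (inradius K / 2) \<subseteq> K" using inball(4) by blast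
  have "diam K \<le> meshsize T"
    unfolding meshsize_def using \<open>finite T\<close> \<open>K \<in> T\<close> by simp
  then have "0 < meshsize T" using inball(1) by linarith
  then have "0 < \<rho> * diam K"
    using quasi_uniform by linarith
  then have "0 < \<rho>"
    using inball(1) by (simp add: zero_less_mult_iff)
  have "\<rho> * diam K \<le> \<rho> * (\<sigma> * inradius K)"
    using regular \<open>0 < \<rho>\<close> by (intro mult_left_mono) auto
  then have "meshsize T \<le> 2 * \<rho> * \<sigma> * (inradius K / 2)"
    using quasi_uniform by (simp add: mult.assoc)
  then show ?thesis
    using that[OF _ x0] inball(1-3) regular \<open>0 < \<rho>\<close> \<open>0 < meshsize T\<close> by simp
qed

lemma admissible_meshsize_le_boundary_diameter:
  assumes adm: "admissible \<Omega> \<sigma> \<rho> C\<delta> Cn T Mh \<nu>" and "bounded \<Omega>" and Ke: "(K, e) \<in> bedges T"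
  shows "meshsize T \<le> \<rho> * \<sigma> * diameter (frontier \<Omega>)"
proof -
  define D where "D = diameter (frontier \<Omega>)"
  have "K \<in> T" "e \<in> edges K" "e \<subseteq> bdry_h T"
    using Ke unfolding bedges_def by auto
  have tri: "triangulation T" and regular: "diam K \<le> \<sigma> * inradius K"
    and quasi_uniform: "meshsize T \<le> \<rho> * diam K"
    and vertices: "\<And>v. v \<in> verts K \<Longrightarrow> v \<in> bdry_h T \<Longrightarrow> v \<in> frontier \<Omega>"
    using adm \<open>K \<in> T\<close> unfolding admissible_def by blast+
  have "is_triangle K"
    using tri \<open>K \<in> T\<close> by (simp add: triangulation_def)
  then obtain a b c where nc: "\<not> collinear {a, b, c}" and K: "K = convex hull {a, b, c}"
    unfolding is_triangle_def by blast
  obtain a' b' where e: "e = closed_segment a' b'" "a' \<in> verts K" "b' \<in> verts K" "a' \<noteq> b'"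
    using \<open>e \<in> edges K\<close> unfolding edges_def by blast
  have "a' \<in> frontier \<Omega>" "b' \<in> frontier \<Omega>"
    using vertices[OF e(2)] vertices[OF e(3)] e(1) \<open>e \<subseteq> bdry_h T\<close> by auto
  moreover have "bounded (frontier \<Omega>)"
    using \<open>bounded \<Omega>\<close> by (rule bounded_subset[OF bounded_closure]) (simp add: frontier_closures)
  ultimately have "dist a' b' \<le> D"
    unfolding D_def by (intro diameter_bounded_bound)
  note inball = shape_regular_triangle_inball[OF \<open>is_triangle K\<close> regular]
  obtain x0 where x0: "cball x0 (inradius K / 2) \<subseteq> K"
    using inball(4) by blast
  have "2 * (inradius K / 2) \<le> dist a' b'"
    using inball(2) by (intro inball_diameter_le_edge_length[OF nc K e(2-4) x0]) simp
  then have "\<sigma> * inradius K \<le> \<sigma> * D"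
    using \<open>dist a' b' \<le> D\<close> inball(3) by (intro mult_left_mono) simp_all
  then have "diam K \<le> \<sigma> * D"
    using regular by linarith
  moreover have "0 < \<rho>"
    by (rule admissible_element_inball[OF adm \<open>K \<in> T\<close>])
  ultimately have "\<rho> * diam K \<le> \<rho> * (\<sigma> * D)"
    by (intro mult_left_mono) simp_all
  then show ?thesis
    using quasi_uniform unfolding D_def by (simp only: mult.assoc)
qed

lemma Tm_0_eq: "Tm 0 m Mh \<nu> v x = v x + Tm 1 m Mh \<nu> v x"
proof -
  have "dirderiv 0 d v x = v x" for d
    by (simp add: dirderiv_def)
  then show ?thesis
    unfolding Tm_def by (simp add: sum.atLeast_Suc_atMost)
qed

lemma norm_Tm_le:
  assumes "\<And>j. norm (dirderiv j (\<nu> x) v x) \<le> fact j / r ^ j * A" "0 < r"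
  shows "norm (Tm j0 m Mh \<nu> v x) \<le> (\<Sum>j=j0..m. (norm (Mh x - x) / r) ^ j) * A"
proof -
  let ?\<delta> = "norm (Mh x - x)"
  have "norm (Tm j0 m Mh \<nu> v x) \<le> (\<Sum>j=j0..m. ?\<delta> ^ j / fact j * norm (dirderiv j (\<nu> x) v x))"
    unfolding Tm_def by (rule order.trans[OF norm_sum]) simp
  also have "\<dots> \<le> (\<Sum>j=j0..m. ?\<delta> ^ j / fact j * (fact j / r ^ j * A))"
    by (intro sum_mono mult_left_mono assms(1)) simp
  also have "\<dots> = (\<Sum>j=j0..m. (?\<delta> / r) ^ j) * A"
    by (simp add: sum_distrib_right power_divide)
  finally show ?thesis .
qed

lemma sum_powers_le:
  fixes q \<beta> h H :: real
  assumes "0 \<le> q" "q \<le> \<beta> * h" "0 \<le> \<beta>" "0 \<le> h" "h \<le> H"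
  shows "(\<Sum>j=1..m. q ^ j) \<le> h * (real m * \<beta> * (1 + \<beta> * H) ^ m)"
proof -
  have "q ^ j \<le> (\<beta> * h) * (1 + \<beta> * H) ^ m" if j: "j \<in> {1..m}" for j
  proof -
    obtain i where i: "j = Suc i" "i < m" using j by (cases j) auto
    have "\<beta> * h \<le> \<beta> * H"
      using assms by (intro mult_left_mono) auto
    then have "q ^ i \<le> (1 + \<beta> * H) ^ i"
      using assms by (intro power_mono) auto
    also have "\<dots> \<le> (1 + \<beta> * H) ^ m"
      using i assms by (intro power_increasing) auto
    finally have "q * q ^ i \<le> (\<beta> * h) * (1 + \<beta> * H) ^ m"
      using assms by (intro mult_mono) auto
    then show ?thesis using i by simp
  qed
  then have "(\<Sum>j=1..m. q ^ j) \<le> (\<Sum>j=1..m. (\<beta> * h) * (1 + \<beta> * H) ^ m)"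
    by (rule sum_mono)
  then show ?thesis by (simp add: mult_ac)
qed

lemma norm_Tm_bounds:
  assumes "\<And>j. norm (dirderiv j (\<nu> x) v x) \<le> fact j / r ^ j * A" "0 < r" "0 \<le> A"
    and "norm (Mh x - x) \<le> \<beta> * h * r" "0 \<le> \<beta>" "0 \<le> h" "h \<le> H"
  shows "norm (Tm 1 m Mh \<nu> v x) \<le> h * (real m * \<beta> * (1 + \<beta> * H) ^ m) * A"
    and "norm (Tm 0 m Mh \<nu> v x) \<le> (1 + H * (real m * \<beta> * (1 + \<beta> * H) ^ m)) * A"
proof -
  let ?Z = "real m * \<beta> * (1 + \<beta> * H) ^ m"
  have "norm (Mh x - x) / r \<le> \<beta> * h"
    using assms(2,4) by (simp add: divide_le_eq)
  then have "(\<Sum>j=1..m. (norm (Mh x - x) / r) ^ j) \<le> h * ?Z"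
    using assms(2,5-7) by (intro sum_powers_le) auto
  then show T1: "norm (Tm 1 m Mh \<nu> v x) \<le> h * ?Z * A"
    using norm_Tm_le[where \<nu> = \<nu> and x = x and v = v and r = r and A = A, OF assms(1,2), of 1 m Mh] assms(3) by (meson mult_right_mono order.trans)
  have "norm (v x) \<le> A"
    using assms(1)[of 0] by (simp add: dirderiv_def)
  moreover have "h * ?Z * A \<le> H * ?Z * A"
    using assms(3,5-7) by (intro mult_right_mono) auto
  ultimately show "norm (Tm 0 m Mh \<nu> v x) \<le> (1 + H * ?Z) * A"
    unfolding Tm_0_eq using T1 norm_triangle_ineq[of "v x" "Tm 1 m Mh \<nu> v x"] by (simp add: algebra_simps)
qed

lemma edge_int_sq_div_diam_le:
  assumes e: "e \<in> edges K" and K: "is_triangle K" "0 < diam K"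
    and f: "\<And>x. x \<in> e \<Longrightarrow> norm (f x) \<le> c * s" and "0 \<le> c" "0 \<le> s"
    and s: "ennreal (s\<^sup>2) \<le> ennreal C * J" and "c\<^sup>2 * C \<le> D"
  shows "edge_int e (\<lambda>x. (norm (f x))\<^sup>2 / diam K) \<le> ennreal D * J"
proof -
  have "convex K" using K(1) by (auto simp: is_triangle_def)
  have "edge_int e (\<lambda>x. (norm (f x))\<^sup>2 / diam K) \<le> ennreal (diam K * ((c * s)\<^sup>2 / diam K))"
  proof (rule edge_int_le[OF e bounded_triangle[OF K(1)] edge_subset[OF e \<open>convex K\<close>]])
    fix x assume "x \<in> e"
    then have "(norm (f x))\<^sup>2 \<le> (c * s)\<^sup>2"
      using f by (intro power_mono) auto
    then show "(norm (f x))\<^sup>2 / diam K \<le> (c * s)\<^sup>2 / diam K"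
      using K(2) by (simp add: divide_right_mono)
  qed (use K(2) in simp)
  also have "\<dots> \<le> ennreal (c\<^sup>2 * C) * J"
    using ennreal_mult_sq_le[OF s, of c] K(2) by simp
  also have "\<dots> \<le> ennreal D * J"
    using \<open>c\<^sup>2 * C \<le> D\<close> by (intro mult_right_mono ennreal_leI) auto
  finally show ?thesis .
qed

lemma admissible_element_inverse_estimate:
  assumes adm: "admissible \<Omega> \<sigma> \<rho> C\<delta> Cn T Mh \<nu>" and "K \<in> T" and RT: "RT k (V K)"
    and Cinv: "inverse_estimate_constant (Suc k) (2 * \<bar>\<sigma>\<bar>) Cinv"
  obtains r A where "0 < r" "0 \<le> A" "0 < diam K" "meshsize T \<le> 2 * \<bar>\<rho>\<bar> * \<bar>\<sigma>\<bar> * r"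
    "\<And>j x d. x \<in> K \<Longrightarrow> norm d = 1 \<Longrightarrow> norm (dirderiv j d (V K) x) \<le> fact j / r ^ j * A"
    "ennreal ((r * A)\<^sup>2) \<le> ennreal Cinv * (\<integral>\<^sup>+ x\<in>K. ennreal (norm (V K x) ^ 2) \<partial>lborel)"
proof -
  obtain x0 r where r: "0 < r" "cball x0 r \<subseteq> K" "0 < diam K" "diam K \<le> 2 * \<sigma> * r" "0 < \<sigma>"
    "0 < \<rho>" "0 < meshsize T" "meshsize T \<le> 2 * \<rho> * \<sigma> * r"
    by (rule admissible_element_inball[OF adm \<open>K \<in> T\<close>])
  have "is_triangle K"
    using adm \<open>K \<in> T\<close> by (auto simp: admissible_def triangulation_def)
  obtain A where "0 \<le> A"
    and deriv: "\<And>j x d. norm (x - x0) \<le> 2 * \<bar>\<sigma>\<bar> * r \<Longrightarrow> norm d = 1 \<Longrightarrow>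
       norm (dirderiv j d (V K) x) \<le> fact j / r ^ j * A"
    and ball_energy: "ennreal ((r * A)\<^sup>2)
      \<le> ennreal Cinv * (\<integral>\<^sup>+ x\<in>cball x0 r. ennreal ((norm (V K x))\<^sup>2) \<partial>lborel)"
    using Cinv RT_components_is_bipoly[OF RT] r(1) unfolding inverse_estimate_constant_def by blast
  have "(\<integral>\<^sup>+ x\<in>cball x0 r. ennreal ((norm (V K x))\<^sup>2) \<partial>lborel)
      \<le> (\<integral>\<^sup>+ x\<in>K. ennreal (norm (V K x) ^ 2) \<partial>lborel)"
    using r(2) by (intro nn_integral_mono) (auto split: split_indicator)
  then have "ennreal ((r * A)\<^sup>2) \<le> ennreal Cinv * (\<integral>\<^sup>+ x\<in>K. ennreal (norm (V K x) ^ 2) \<partial>lborel)"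
    using ball_energy by (meson mult_left_mono order.trans zero_le)
  moreover have "norm (dirderiv j d (V K) x) \<le> fact j / r ^ j * A" if "x \<in> K" "norm d = 1" for j x d
  proof (rule deriv[OF _ \<open>norm d = 1\<close>])
    have "x0 \<in> K"
      using r(1,2) by (meson centre_in_cball less_imp_le subsetD)
    then have "norm (x - x0) \<le> diam K"
      using diameter_bounded_bound[OF bounded_triangle[OF \<open>is_triangle K\<close>] \<open>x \<in> K\<close>, of x0]
      by (simp add: diam_def dist_norm)
    then show "norm (x - x0) \<le> 2 * \<bar>\<sigma>\<bar> * r"
      using r(4,5) by simp
  qed
  ultimately show ?thesis
    using that[OF r(1) \<open>0 \<le> A\<close> r(3)] r(5,6,8) by simp
qed

lemma admissible_boundary_Tm_bounds:
  assumes adm: "admissible \<Omega> \<sigma> \<rho> C\<delta> Cn T Mh \<nu>" and "x \<in> bdry_h T"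
    and deriv: "\<And>j d. norm d = 1 \<Longrightarrow> norm (dirderiv j d v x) \<le> fact j / r ^ j * A"
    and "0 < r" "0 \<le> A" "0 \<le> \<kappa>" "0 < meshsize T" "meshsize T \<le> \<kappa> * r" "meshsize T \<le> H"
    and \<beta>_def: "\<beta> = \<bar>C\<delta>\<bar> * \<kappa>" and Z_def: "Z = real m * \<beta> * (1 + \<beta> * H) ^ m"
  shows "norm (Tm 1 m Mh \<nu> v x) \<le> (\<kappa> * Z) * (r * A)"
    and "norm (Tm 0 m Mh \<nu> v x) \<le> ((1 + H * Z) * \<kappa> / meshsize T) * (r * A)"
proof -
  define h where "h = meshsize T"
  have "0 \<le> \<beta>" "0 \<le> H" "0 \<le> Z"
    using assms(6,7,9) by (simp_all add: \<beta>_def Z_def)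
  have "norm (Mh x - x) \<le> C\<delta> * h ^ 2"
    using adm \<open>x \<in> bdry_h T\<close> unfolding admissible_def h_def by blast
  also have "\<dots> \<le> \<bar>C\<delta>\<bar> * h * h"
    using mult_right_mono[OF abs_ge_self, of "h * h" C\<delta>] by (simp add: power2_eq_square mult.assoc)
  also have "\<dots> \<le> \<bar>C\<delta>\<bar> * h * (\<kappa> * r)"
    using assms(7,8) by (intro mult_left_mono) (auto simp: h_def)
  finally have "norm (Mh x - x) \<le> \<beta> * h * r"
    by (simp add: \<beta>_def mult_ac)
  moreover have "norm (\<nu> x) = 1"
    using adm \<open>x \<in> bdry_h T\<close> unfolding admissible_def by blast
  ultimately have bounds: "norm (Tm 1 m Mh \<nu> v x) \<le> h * Z * A" "norm (Tm 0 m Mh \<nu> v x) \<le> (1 + H * Z) * A"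
    using norm_Tm_bounds[of \<nu> x v r A Mh \<beta> h H m] deriv assms(4,5,7,9) \<open>0 \<le> \<beta>\<close>
    unfolding Z_def h_def by auto
  have "h * Z * A \<le> (\<kappa> * r) * Z * A"
    using assms(8) \<open>0 \<le> Z\<close> \<open>0 \<le> A\<close> by (intro mult_right_mono) (auto simp: h_def)
  with bounds(1) show "norm (Tm 1 m Mh \<nu> v x) \<le> (\<kappa> * Z) * (r * A)"
    by (simp add: mult_ac)
  have "(1 + H * Z) * A * h \<le> (1 + H * Z) * A * (\<kappa> * r)"
    using assms(8) \<open>0 \<le> H\<close> \<open>0 \<le> Z\<close> \<open>0 \<le> A\<close> by (intro mult_left_mono) (auto simp: h_def)
  then have "(1 + H * Z) * A \<le> ((1 + H * Z) * \<kappa> / h) * (r * A)"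
    using assms(7) by (simp add: h_def pos_le_divide_eq mult_ac)
  with bounds(2) show "norm (Tm 0 m Mh \<nu> v x) \<le> ((1 + H * Z) * \<kappa> / meshsize T) * (r * A)"
    by (simp add: h_def)
qed

lemma boundary_edge_estimates:
  assumes adm: "admissible \<Omega> \<sigma> \<rho> C\<delta> Cn T Mh \<nu>" and "bounded \<Omega>" and Ke: "(K, e) \<in> bedges T"
    and RT: "RT k (V K)" and Cinv: "inverse_estimate_constant (Suc k) (2 * \<bar>\<sigma>\<bar>) Cinv"
    and \<kappa>_def: "\<kappa> = 2 * \<bar>\<rho>\<bar> * \<bar>\<sigma>\<bar>" and \<beta>_def: "\<beta> = \<bar>C\<delta>\<bar> * \<kappa>"
    and H_def: "H = \<bar>\<rho>\<bar> * \<bar>\<sigma>\<bar> * diameter (frontier \<Omega>)"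
    and Z_def: "Z = real m * \<beta> * (1 + \<beta> * H) ^ m"
    and C: "(\<kappa> * Z)\<^sup>2 * Cinv \<le> C" "((1 + H * Z) * \<kappa>)\<^sup>2 * Cinv \<le> C"
  shows "edge_int e (\<lambda>x. norm (Tm 1 m Mh \<nu> (V K) x) ^ 2 / diam K)
      \<le> ennreal C * (\<integral>\<^sup>+ x\<in>K. ennreal (norm (V K x) ^ 2) \<partial>lborel)"
    and "edge_int e (\<lambda>x. norm (Tm 0 m Mh \<nu> (V K) x) ^ 2 / diam K)
      \<le> ennreal (C / meshsize T ^ 2) * (\<integral>\<^sup>+ x\<in>K. ennreal (norm (V K x) ^ 2) \<partial>lborel)"
proof -
  have "K \<in> T" "e \<in> edges K" "e \<subseteq> bdry_h T"
    using Ke unfolding bedges_def by auto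
  have "is_triangle K"
    using adm \<open>K \<in> T\<close> by (auto simp: admissible_def triangulation_def)
  then have "convex K"
    by (auto simp: is_triangle_def)
  obtain r A where "0 < r" "0 \<le> A" "0 < diam K" and h_le: "meshsize T \<le> 2 * \<bar>\<rho>\<bar> * \<bar>\<sigma>\<bar> * r"
    and deriv: "\<And>j x d. x \<in> K \<Longrightarrow> norm d = 1 \<Longrightarrow> norm (dirderiv j d (V K) x) \<le> fact j / r ^ j * A"
    and energy: "ennreal ((r * A)\<^sup>2) \<le> ennreal Cinv * (\<integral>\<^sup>+ x\<in>K. ennreal (norm (V K x) ^ 2) \<partial>lborel)"
    using admissible_element_inverse_estimate[where V = V, OF adm \<open>K \<in> T\<close> RT Cinv] by blast
  have "meshsize T \<le> \<kappa> * r"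
    using h_le by (simp add: \<kappa>_def)
  have "0 < meshsize T" "0 < \<sigma>" "0 < \<rho>"
    by (rule admissible_element_inball[OF adm \<open>K \<in> T\<close>]; assumption)+
  then have "meshsize T \<le> H"
    using admissible_meshsize_le_boundary_diameter[OF adm \<open>bounded \<Omega>\<close> Ke] by (simp add: H_def)
  have "0 \<le> H" "0 \<le> \<kappa>"
    using \<open>0 < meshsize T\<close> \<open>meshsize T \<le> H\<close> by (simp_all add: \<kappa>_def)
  then have "0 \<le> Z"
    by (simp add: Z_def \<beta>_def)
  have Tm_bounds: "norm (Tm 1 m Mh \<nu> (V K) x) \<le> (\<kappa> * Z) * (r * A)"
    "norm (Tm 0 m Mh \<nu> (V K) x) \<le> ((1 + H * Z) * \<kappa> / meshsize T) * (r * A)" if "x \<in> e" for x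
  proof -
    have "x \<in> K" "x \<in> bdry_h T"
      using that edge_subset[OF \<open>e \<in> edges K\<close> \<open>convex K\<close>] \<open>e \<subseteq> bdry_h T\<close> by auto
    then show "norm (Tm 1 m Mh \<nu> (V K) x) \<le> (\<kappa> * Z) * (r * A)"
      "norm (Tm 0 m Mh \<nu> (V K) x) \<le> ((1 + H * Z) * \<kappa> / meshsize T) * (r * A)"
      using admissible_boundary_Tm_bounds[OF adm _ deriv \<open>0 < r\<close> \<open>0 \<le> A\<close> \<open>0 \<le> \<kappa>\<close> \<open>0 < meshsize T\<close>
          \<open>meshsize T \<le> \<kappa> * r\<close> \<open>meshsize T \<le> H\<close> \<beta>_def Z_def] by auto
  qed
  show "edge_int e (\<lambda>x. norm (Tm 1 m Mh \<nu> (V K) x) ^ 2 / diam K)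
      \<le> ennreal C * (\<integral>\<^sup>+ x\<in>K. ennreal (norm (V K x) ^ 2) \<partial>lborel)"
    using Tm_bounds(1) \<open>0 < r\<close> \<open>0 \<le> A\<close> \<open>0 \<le> Z\<close> \<open>0 \<le> \<kappa>\<close> C(1)
    by (intro edge_int_sq_div_diam_le[where c = "\<kappa> * Z",
          OF \<open>e \<in> edges K\<close> \<open>is_triangle K\<close> \<open>0 < diam K\<close> _ _ _ energy]) simp_all
  show "edge_int e (\<lambda>x. norm (Tm 0 m Mh \<nu> (V K) x) ^ 2 / diam K)
      \<le> ennreal (C / meshsize T ^ 2) * (\<integral>\<^sup>+ x\<in>K. ennreal (norm (V K x) ^ 2) \<partial>lborel)"
  proof (rule edge_int_sq_div_diam_le[where c = "(1 + H * Z) * \<kappa> / meshsize T",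
        OF \<open>e \<in> edges K\<close> \<open>is_triangle K\<close> \<open>0 < diam K\<close> Tm_bounds(2) _ _ energy])
    show "((1 + H * Z) * \<kappa> / meshsize T)\<^sup>2 * Cinv \<le> C / meshsize T ^ 2"
      using C(2) by (simp add: power_divide divide_right_mono)
  qed (use \<open>0 < r\<close> \<open>0 < meshsize T\<close> \<open>0 \<le> A\<close> \<open>0 \<le> Z\<close> \<open>0 \<le> H\<close> \<open>0 \<le> \<kappa>\<close> in auto)
qed

lemma boundary_sum_estimates:
  assumes adm: "admissible \<Omega> \<sigma> \<rho> C\<delta> Cn T Mh \<nu>" and "bounded \<Omega>" and "V \<in> Vh k T"
    and Cinv: "inverse_estimate_constant (Suc k) (2 * \<bar>\<sigma>\<bar>) Cinv"
    and \<kappa>_def: "\<kappa> = 2 * \<bar>\<rho>\<bar> * \<bar>\<sigma>\<bar>" and \<beta>_def: "\<beta> = \<bar>C\<delta>\<bar> * \<kappa>"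
    and H_def: "H = \<bar>\<rho>\<bar> * \<bar>\<sigma>\<bar> * diameter (frontier \<Omega>)"
    and Z_def: "Z = real m * \<beta> * (1 + \<beta> * H) ^ m"
    and C: "(\<kappa> * Z)\<^sup>2 * Cinv \<le> C" "((1 + H * Z) * \<kappa>)\<^sup>2 * Cinv \<le> C"
  shows "(\<Sum>(K, e)\<in>bedges T. edge_int e (\<lambda>x. norm (Tm 1 m Mh \<nu> (V K) x) ^ 2 / diam K))
      \<le> ennreal (9 * C) * (\<Sum>K\<in>T. \<integral>\<^sup>+ x\<in>K. ennreal (norm (V K x) ^ 2) \<partial>lborel)"
    and "(\<Sum>(K, e)\<in>bedges T. edge_int e (\<lambda>x. norm (Tm 0 m Mh \<nu> (V K) x) ^ 2 / diam K))
      \<le> ennreal (9 * C / meshsize T ^ 2) * (\<Sum>K\<in>T. \<integral>\<^sup>+ x\<in>K. ennreal (norm (V K x) ^ 2) \<partial>lborel)"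
proof -
  have tri: "triangulation T"
    using adm unfolding admissible_def by blast
  have RT: "RT k (V K)" if "(K, e) \<in> bedges T" for K e
    using \<open>V \<in> Vh k T\<close> that by (simp add: Vh_def bedges_def)
  note estimates = boundary_edge_estimates[OF adm \<open>bounded \<Omega>\<close> _ RT Cinv \<kappa>_def \<beta>_def H_def Z_def C]
  show "(\<Sum>(K, e)\<in>bedges T. edge_int e (\<lambda>x. norm (Tm 1 m Mh \<nu> (V K) x) ^ 2 / diam K))
      \<le> ennreal (9 * C) * (\<Sum>K\<in>T. \<integral>\<^sup>+ x\<in>K. ennreal (norm (V K x) ^ 2) \<partial>lborel)"
    by (rule sum_bedges_le[OF tri]) (simp only: case_prod_conv, rule estimates(1))
  have "(\<Sum>(K, e)\<in>bedges T. edge_int e (\<lambda>x. norm (Tm 0 m Mh \<nu> (V K) x) ^ 2 / diam K))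
      \<le> ennreal (9 * (C / meshsize T ^ 2)) * (\<Sum>K\<in>T. \<integral>\<^sup>+ x\<in>K. ennreal (norm (V K x) ^ 2) \<partial>lborel)"
    by (rule sum_bedges_le[OF tri]) (simp only: case_prod_conv, rule estimates(2))
  then show "(\<Sum>(K, e)\<in>bedges T. edge_int e (\<lambda>x. norm (Tm 0 m Mh \<nu> (V K) x) ^ 2 / diam K))
      \<le> ennreal (9 * C / meshsize T ^ 2) * (\<Sum>K\<in>T. \<integral>\<^sup>+ x\<in>K. ennreal (norm (V K x) ^ 2) \<partial>lborel)"
    by simp
qed

theorem lemma4p4:
  fixes \<Omega> :: "pt set" and k m :: nat and \<sigma> \<rho> C\<delta> Cn :: real
  assumes "open \<Omega>" "connected \<Omega>" "bounded \<Omega>" "lipschitz_boundary \<Omega>" "k \<ge> 1"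
  shows "\<exists>C. \<forall>\<T> Mh \<nu> V. admissible \<Omega> \<sigma> \<rho> C\<delta> Cn \<T> Mh \<nu> \<and> V \<in> Vh k \<T> \<longrightarrow>
     (\<Sum>(K, e)\<in>bedges \<T>. edge_int e (\<lambda>x. norm (Tm 1 m Mh \<nu> (V K) x) ^ 2 / diam K))
        \<le> ennreal C * (\<Sum>K\<in>\<T>. \<integral>\<^sup>+ x\<in>K. ennreal (norm (V K x) ^ 2) \<partial>lborel) \<and>
     (\<Sum>(K, e)\<in>bedges \<T>. edge_int e (\<lambda>x. norm (Tm 0 m Mh \<nu> (V K) x) ^ 2 / diam K))
        \<le> ennreal (C / meshsize \<T> ^ 2) * (\<Sum>K\<in>\<T>. \<integral>\<^sup>+ x\<in>K. ennreal (norm (V K x) ^ 2) \<partial>lborel)"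
proof -
  obtain Cinv where Cinv: "inverse_estimate_constant (Suc k) (2 * \<bar>\<sigma>\<bar>) Cinv"
    using inverse_estimate_constant_exists[of "2 * \<bar>\<sigma>\<bar>"] by auto
  define \<kappa> where "\<kappa> = 2 * \<bar>\<rho>\<bar> * \<bar>\<sigma>\<bar>"
  define \<beta> where "\<beta> = \<bar>C\<delta>\<bar> * \<kappa>"
  define H where "H = \<bar>\<rho>\<bar> * \<bar>\<sigma>\<bar> * diameter (frontier \<Omega>)"
  define Z where "Z = real m * \<beta> * (1 + \<beta> * H) ^ m"
  define C where "C = max ((\<kappa> * Z)\<^sup>2 * Cinv) (((1 + H * Z) * \<kappa>)\<^sup>2 * Cinv)"
  have "(\<kappa> * Z)\<^sup>2 * Cinv \<le> C" "((1 + H * Z) * \<kappa>)\<^sup>2 * Cinv \<le> C"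
    by (simp_all add: C_def)
  note estimates = boundary_sum_estimates[OF _ \<open>bounded \<Omega>\<close> _ Cinv \<kappa>_def \<beta>_def H_def Z_def this]
  show ?thesis
    by (intro exI[of _ "9 * C"] allI impI conjI; elim conjE) (rule estimates(1,2); assumption)+
qed

end
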